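(* For any two elements $w,w'\in W(M)$ one has $l_M(ww')=l_M(w)+l_M(w')$ if and only if $l(ww')=l(w)+l(w')$.
   Context: Let $F$ be a non-archimedean local field and $G$ the group of $F$-points of a connected reductive group over $F$. Fix a minimal parabolic subgroup $P_0=M_0U_0$, a maximal $F$-split torus $A_0\subseteq M_0$, and a standard parabolic subgroup $P=MU\supseteq P_0$ with $M\supseteq M_0$. Let $W=W^G$ be the Weyl group of $G$ with respect to $A_0$, $W^M$ that of $M$, and $l$ the usual length function on $W$ (with respect to the simple roots defined by $P_0$). $W(M)$ denotes the set of elements of $W$ that are of minimal length in their coset $wW^M$, for $w$ running over $\{w\in W: w^{-1}Mw=M\}$; it is a subgroup of $W$. Let $A_M$ be the maximal split central torus of $M$, $\Sigma(A_M)$ the set of nontrivial roots of $A_M$ in the Lie algebra of $G$, $\Sigma(P)$ those occurring in the Lie algebra of $U$, and $\Sigma_{red}(\cdot)$ the reduced roots in a given set; $\overline P$ is the parabolic opposite to $P$ with Levi $M$. For $w\in W(M)$ put $l_M(w)=|\Sigma_{red}(P)\cap\Sigma_{red}(w\overline{P}w^{-1})|$. *)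

theory Defs
  imports "HOL-Analysis.Analysis"
begin

text \<open>The relative root system of G with respect to A_0 is modelled as an abstract
(possibly non-reduced) root system R in a Euclidean space (a_0^* with a W-invariant
inner product). The minimal parabolic P_0 corresponds to a base Delta of R, the standard
parabolic P = MU to a subset Theta of Delta.\<close>

definition refl :: "'a::real_inner \<Rightarrow> 'a \<Rightarrow> 'a" where
  "refl \<alpha> v = v - ((2 * (v \<bullet> \<alpha>)) / (\<alpha> \<bullet> \<alpha>)) *\<^sub>R \<alpha>"

definition root_system :: "'a::euclidean_space set \<Rightarrow> bool" where
  "root_system R \<longleftrightarrow> finite R \<and> 0 \<notin> R \<and>
     (\<forall>\<alpha>\<in>R. \<forall>\<beta>\<in>R. refl \<alpha> \<beta> \<in> R \<and> 2 * (\<beta> \<bullet> \<alpha>) / (\<alpha> \<bullet> \<alpha>) \<in> \<int>)"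

definition is_base :: "'a::euclidean_space set \<Rightarrow> 'a set \<Rightarrow> bool" where
  "is_base R \<Delta> \<longleftrightarrow> \<Delta> \<subseteq> R \<and> independent \<Delta> \<and>
     (\<forall>\<alpha>\<in>R. \<exists>c. (\<forall>\<delta>\<in>\<Delta>. c \<delta> \<in> \<int>) \<and> ((\<forall>\<delta>\<in>\<Delta>. 0 \<le> c \<delta>) \<or> (\<forall>\<delta>\<in>\<Delta>. c \<delta> \<le> 0))
        \<and> \<alpha> = (\<Sum>\<delta>\<in>\<Delta>. c \<delta> *\<^sub>R \<delta>))"

definition positive_root :: "'a::euclidean_space set \<Rightarrow> 'a set \<Rightarrow> 'a \<Rightarrow> bool" where
  "positive_root R \<Delta> \<alpha> \<longleftrightarrow> \<alpha> \<in> R \<and> (\<exists>c. (\<forall>\<delta>\<in>\<Delta>. 0 \<le> c \<delta>) \<and> \<alpha> = (\<Sum>\<delta>\<in>\<Delta>. c \<delta> *\<^sub>R \<delta>))"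

definition negative_root :: "'a::euclidean_space set \<Rightarrow> 'a set \<Rightarrow> 'a \<Rightarrow> bool" where
  "negative_root R \<Delta> \<alpha> \<longleftrightarrow> \<alpha> \<in> R \<and> positive_root R \<Delta> (- \<alpha>)"

inductive_set weyl_group :: "'a::euclidean_space set \<Rightarrow> ('a \<Rightarrow> 'a) set" for R where
  weyl_id: "id \<in> weyl_group R"
| weyl_step: "w \<in> weyl_group R \<Longrightarrow> \<alpha> \<in> R \<Longrightarrow> refl \<alpha> \<circ> w \<in> weyl_group R"

definition simple_word :: "'a::euclidean_space list \<Rightarrow> 'a \<Rightarrow> 'a" where
  "simple_word ss = foldr (\<lambda>\<delta> f. refl \<delta> \<circ> f) ss id"

definition len :: "'a::euclidean_space set \<Rightarrow> ('a \<Rightarrow> 'a) \<Rightarrow> nat" where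
  "len \<Delta> w = (LEAST n. \<exists>ss. length ss = n \<and> set ss \<subseteq> \<Delta> \<and> w = simple_word ss)"

definition levi_roots :: "'a::euclidean_space set \<Rightarrow> 'a set \<Rightarrow> 'a set" where
  "levi_roots R \<Theta> = R \<inter> span \<Theta>"

text \<open>a_M = Lie algebra of A_M inside a_0, and restriction of characters to it.\<close>
definition aM :: "'a::euclidean_space set \<Rightarrow> 'a set" where
  "aM \<Theta> = {x. \<forall>\<delta>\<in>\<Theta>. \<delta> \<bullet> x = 0}"

definition resM :: "'a::euclidean_space set \<Rightarrow> 'a \<Rightarrow> ('a \<Rightarrow> real)" where
  "resM \<Theta> \<alpha> = restrict (\<lambda>x. \<alpha> \<bullet> x) (aM \<Theta>)"

definition roots_AM :: "'a::euclidean_space set \<Rightarrow> 'a set \<Rightarrow> ('a \<Rightarrow> real) set" where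
  "roots_AM R \<Theta> = resM \<Theta> ` R - {resM \<Theta> 0}"

definition reduced_AM :: "'a::euclidean_space set \<Rightarrow> 'a set \<Rightarrow> ('a \<Rightarrow> real) \<Rightarrow> bool" where
  "reduced_AM R \<Theta> \<beta> \<longleftrightarrow> \<beta> \<in> roots_AM R \<Theta> \<and>
     \<not> (\<exists>\<gamma>\<in>roots_AM R \<Theta>. \<exists>c::real. c > 1 \<and> (\<forall>x\<in>aM \<Theta>. \<beta> x = c * \<gamma> x))"

text \<open>Sigma(P): roots of A_M in Lie(U).\<close>
definition roots_P :: "'a::euclidean_space set \<Rightarrow> 'a set \<Rightarrow> 'a set \<Rightarrow> ('a \<Rightarrow> real) set" where
  "roots_P R \<Delta> \<Theta> = resM \<Theta> ` {\<alpha>. positive_root R \<Delta> \<alpha>} - {resM \<Theta> 0}"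

text \<open>Sigma(w Pbar w^-1): roots of A_M in Ad(w) Lie(Ubar).\<close>
definition roots_conj_opp :: "'a::euclidean_space set \<Rightarrow> 'a set \<Rightarrow> 'a set \<Rightarrow> ('a \<Rightarrow> 'a) \<Rightarrow> ('a \<Rightarrow> real) set" where
  "roots_conj_opp R \<Delta> \<Theta> w = resM \<Theta> ` (w ` {\<alpha>. negative_root R \<Delta> \<alpha>}) - {resM \<Theta> 0}"

definition lM :: "'a::euclidean_space set \<Rightarrow> 'a set \<Rightarrow> 'a set \<Rightarrow> ('a \<Rightarrow> 'a) \<Rightarrow> nat" where
  "lM R \<Delta> \<Theta> w = card {\<beta>. reduced_AM R \<Theta> \<beta> \<and> \<beta> \<in> roots_P R \<Delta> \<Theta> \<and> \<beta> \<in> roots_conj_opp R \<Delta> \<Theta> w}"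

definition W_M :: "'a::euclidean_space set \<Rightarrow> 'a set \<Rightarrow> 'a set \<Rightarrow> ('a \<Rightarrow> 'a) set" where
  "W_M R \<Delta> \<Theta> = {w \<in> weyl_group R. w ` levi_roots R \<Theta> = levi_roots R \<Theta> \<and>
      (\<forall>v\<in>weyl_group (levi_roots R \<Theta>). len \<Delta> w \<le> len \<Delta> (w \<circ> v))}"

end

theory Submission
  imports Defs
begin

text \<open>
  Both sides of the equivalence count sign changes of roots.

  (1) For w in the Weyl group, the length l(w) equals the number of positive indivisible
  roots that w makes negative; this is proved by the usual deletion argument for words in
  simple reflections.  Counting sign changes in both directions gives 2 l(w), and for a
  product one gets 2 l(ww') + 2 |E| = 2 l(w) + 2 l(w'), where E consists of the indivisible
  roots whose sign changes both from alpha to w' alpha and from w' alpha to w w' alpha.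

  (2) Elements normalizing the Levi roots act on the roots of A_M.  On the reduced ones the
  same bookkeeping gives 2 l_M(w) as a number of sign changes, and the analogous identity
  with a set E_M of reduced roots of A_M changing sign twice.

  (3) Elements of W(M) preserve the sign of Levi roots, and every root outside the Levi is,
  modulo the span of Theta, a positive multiple of a representative of a reduced root of A_M
  with the same sign behaviour.  Hence E is empty iff E_M is empty, which is the theorem.
\<close>

lemma refl_linear: "linear (refl a)"
  unfolding refl_def
  by (intro linearI) (auto simp: inner_add_left algebra_simps add_divide_distrib
      scaleR_add_left[symmetric] simp del: scaleR_add_left)

lemma refl_inner: assumes "a \<noteq> 0" shows "refl a x \<bullet> refl a y = x \<bullet> y"
  using assms unfolding refl_def by (simp add: inner_diff_left inner_diff_right field_simps inner_commute)

lemma refl_involutive: assumes "a \<noteq> 0" shows "refl a (refl a x) = x"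
  using assms unfolding refl_def by (simp add: inner_diff_left algebra_simps field_simps)

lemma refl_self: assumes "a \<noteq> 0" shows "refl a a = - a"
  using assms unfolding refl_def by (simp add: scaleR_2)

lemma refl_scale_root: assumes "c \<noteq> 0" shows "refl (c *\<^sub>R a) = refl a"
  using assms unfolding refl_def by (auto simp: fun_eq_iff field_simps power2_eq_square)

lemma refl_conj_comp:
  assumes "linear f" "\<And>x y. f x \<bullet> f y = x \<bullet> y"
  shows "f \<circ> refl a = refl (f a) \<circ> f"
  using assms unfolding refl_def by (auto simp: fun_eq_iff linear_diff linear_scale)

lemma refl_conj_refl: assumes "a \<noteq> 0" shows "refl b = refl a \<circ> refl (refl a b) \<circ> refl a"
proof
  fix x
  have "refl a \<circ> refl (refl a b) = refl b \<circ> refl a"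
    using refl_conj_comp[OF refl_linear refl_inner[OF assms], of "refl a b"] refl_involutive[OF assms] by simp
  then show "refl b x = (refl a \<circ> refl (refl a b) \<circ> refl a) x"
    using refl_involutive[OF assms] by (metis comp_apply)
qed

section \<open>Counting sign changes\<close>

lemma card_sign_changes_double:
  assumes fin: "finite X"
    and neg_X: "\<And>x. x \<in> X \<Longrightarrow> neg x \<in> X"
    and neg_neg: "\<And>x. x \<in> X \<Longrightarrow> neg (neg x) = x"
    and pos_neg: "\<And>x. x \<in> X \<Longrightarrow> is_pos (neg x) \<longleftrightarrow> \<not> is_pos x"
    and f_X: "\<And>x. x \<in> X \<Longrightarrow> f x \<in> X"
    and f_neg: "\<And>x. x \<in> X \<Longrightarrow> f (neg x) = neg (f x)"
  shows "card {x \<in> X. is_pos x \<noteq> is_pos (f x)} = 2 * card {x \<in> X. is_pos x \<and> \<not> is_pos (f x)}"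
proof -
  define S where "S = {x \<in> X. is_pos x \<and> \<not> is_pos (f x)}"
  define N where "N = {x \<in> X. \<not> is_pos x \<and> is_pos (f x)}"
  have split: "{x \<in> X. is_pos x \<noteq> is_pos (f x)} = S \<union> N" and disj: "S \<inter> N = {}"
    unfolding S_def N_def by auto
  have "neg ` S = N"
  proof (intro set_eqI iffI)
    fix y assume "y \<in> neg ` S"
    then show "y \<in> N" unfolding S_def N_def using neg_X pos_neg f_X f_neg by auto
  next
    fix y assume y: "y \<in> N"
    then have "neg y \<in> S" unfolding S_def N_def using neg_X pos_neg f_X f_neg by auto
    then show "y \<in> neg ` S" using neg_neg y unfolding N_def by (metis (no_types, lifting) image_eqI mem_Collect_eq)
  qed
  moreover have "inj_on neg S" unfolding S_def by (rule inj_on_inverseI[where g = neg]) (use neg_neg in auto)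
  ultimately have "card N = card S" using card_image by blast
  moreover have "finite S" "finite N" unfolding S_def N_def using fin by auto
  ultimately show ?thesis unfolding split S_def[symmetric] using card_Un_disjoint[OF _ _ disj] by simp
qed

lemma card_filter_eq_sum: "finite A \<Longrightarrow> card {x \<in> A. Q x} = (\<Sum>x\<in>A. if Q x then 1 else 0 :: nat)"
  using sum.inter_filter[of A "\<lambda>x. 1::nat" Q] by simp

lemma card_sign_changes_inverse:
  fixes is_pos :: "'a \<Rightarrow> bool"
  assumes f: "bij_betw f X X" and gf: "\<And>x. x \<in> X \<Longrightarrow> g (f x) = x"
  shows "card {x \<in> X. is_pos x \<noteq> is_pos (f x)} = card {x \<in> X. is_pos x \<noteq> is_pos (g x)}"
proof -
  have "f ` {x \<in> X. is_pos x \<noteq> is_pos (f x)} = {x \<in> X. is_pos x \<noteq> is_pos (g x)}"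
  proof (intro set_eqI iffI)
    fix y assume "y \<in> f ` {x \<in> X. is_pos x \<noteq> is_pos (f x)}"
    then show "y \<in> {x \<in> X. is_pos x \<noteq> is_pos (g x)}" using gf bij_betw_apply[OF f] by auto
  next
    fix y assume y: "y \<in> {x \<in> X. is_pos x \<noteq> is_pos (g x)}"
    then obtain x where "x \<in> X" "y = f x" using bij_betw_imp_surj_on[OF f] by blast
    then show "y \<in> f ` {x \<in> X. is_pos x \<noteq> is_pos (f x)}" using y gf by auto
  qed
  moreover have "inj_on f {x \<in> X. is_pos x \<noteq> is_pos (f x)}"
    using bij_betw_imp_inj_on[OF f] by (rule inj_on_subset) auto
  ultimately show ?thesis using card_image by fastforce
qed

text \<open>
  Sign changes under a composite g \<circ> f, with f a permutation of X: the elements changing sign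
  twice (under f and then under g) are exactly the defect of additivity.
\<close>
lemma card_sign_changes_comp:
  fixes is_pos :: "'a \<Rightarrow> bool"
  assumes fin: "finite X" and f: "bij_betw f X X"
  shows "card {x \<in> X. is_pos x \<noteq> is_pos (g (f x))}
           + 2 * card {x \<in> X. is_pos x \<noteq> is_pos (f x) \<and> is_pos (f x) \<noteq> is_pos (g (f x))}
         = card {y \<in> X. is_pos y \<noteq> is_pos (g y)} + card {x \<in> X. is_pos x \<noteq> is_pos (f x)}"
proof -
  have pullback: "card {y \<in> X. is_pos y \<noteq> is_pos (g y)} = card {x \<in> X. is_pos (f x) \<noteq> is_pos (g (f x))}"
  proof -
    have "f ` {x \<in> X. is_pos (f x) \<noteq> is_pos (g (f x))} = {y \<in> X. is_pos y \<noteq> is_pos (g y)}"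
      using bij_betw_imp_surj_on[OF f] by auto
    moreover have "inj_on f {x \<in> X. is_pos (f x) \<noteq> is_pos (g (f x))}"
      using bij_betw_imp_inj_on[OF f] by (rule inj_on_subset) auto
    ultimately show ?thesis using card_image by fastforce
  qed
  show ?thesis
    unfolding pullback card_filter_eq_sum[OF fin] sum_distrib_left sum.distrib[symmetric]
    by (intro sum.cong refl) auto
qed

locale based_root_system =
  fixes R \<Delta> :: "'a::euclidean_space set"
  assumes root_system: "root_system R" and base: "is_base R \<Delta>"
begin

abbreviation pos :: "'a \<Rightarrow> bool" where "pos \<equiv> positive_root R \<Delta>"

lemma finite_R: "finite R" using root_system unfolding root_system_def by auto
lemma root_nonzero: "\<alpha> \<in> R \<Longrightarrow> \<alpha> \<noteq> 0" using root_system unfolding root_system_def by auto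
lemma refl_in_R: "\<alpha> \<in> R \<Longrightarrow> \<beta> \<in> R \<Longrightarrow> refl \<alpha> \<beta> \<in> R" using root_system unfolding root_system_def by auto
lemma cartan_integer: "\<alpha> \<in> R \<Longrightarrow> \<beta> \<in> R \<Longrightarrow> 2 * (\<beta> \<bullet> \<alpha>) / (\<alpha> \<bullet> \<alpha>) \<in> \<int>"
  using root_system unfolding root_system_def by auto
lemma uminus_in_R: "\<alpha> \<in> R \<Longrightarrow> - \<alpha> \<in> R" using refl_in_R[of \<alpha> \<alpha>] refl_self[OF root_nonzero] by metis
lemma base_subset_R: "\<Delta> \<subseteq> R" using base unfolding is_base_def by auto
lemma finite_base: "finite \<Delta>" using base_subset_R finite_R finite_subset by auto

lemma root_expansion: "\<alpha> \<in> R \<Longrightarrow> \<exists>c. (\<forall>\<delta>\<in>\<Delta>. c \<delta> \<in> \<int>) \<and> ((\<forall>\<delta>\<in>\<Delta>. 0 \<le> c \<delta>) \<or> (\<forall>\<delta>\<in>\<Delta>. c \<delta> \<le> 0))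
        \<and> \<alpha> = (\<Sum>\<delta>\<in>\<Delta>. c \<delta> *\<^sub>R \<delta>)"
  using base unfolding is_base_def by auto

lemma base_coeff_unique:
  assumes "(\<Sum>\<delta>\<in>\<Delta>. c \<delta> *\<^sub>R \<delta>) = (\<Sum>\<delta>\<in>\<Delta>. d \<delta> *\<^sub>R \<delta>)" "\<gamma> \<in> \<Delta>"
  shows "c \<gamma> = d \<gamma>"
proof (rule ccontr)
  assume ne: "c \<gamma> \<noteq> d \<gamma>"
  have "(\<Sum>\<delta>\<in>\<Delta>. (c \<delta> - d \<delta>) *\<^sub>R \<delta>) = 0"
    using assms(1) by (simp add: scaleR_diff_left sum_subtractf)
  then have "dependent \<Delta>" using ne assms(2)
    by (intro iffD2[OF dependent_finite[OF finite_base]]) (rule exI[of _ "\<lambda>\<delta>. c \<delta> - d \<delta>"], auto)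
  then show False using base unfolding is_base_def by simp
qed

lemma pos_coeff_nonneg:
  assumes "pos \<alpha>" "\<alpha> = (\<Sum>\<delta>\<in>\<Delta>. c \<delta> *\<^sub>R \<delta>)" "\<gamma> \<in> \<Delta>"
  shows "c \<gamma> \<ge> 0"
proof -
  obtain e where e: "\<forall>\<delta>\<in>\<Delta>. 0 \<le> e \<delta>" "\<alpha> = (\<Sum>\<delta>\<in>\<Delta>. e \<delta> *\<^sub>R \<delta>)"
    using assms(1) unfolding positive_root_def by blast
  have "e \<gamma> = c \<gamma>" using base_coeff_unique[OF trans[OF sym[OF e(2)] assms(2)] assms(3)] .
  then show ?thesis using e(1) assms(3) by auto
qed

text \<open>Since every root has coefficients of constant sign, one positive coefficient makes it positive.\<close>
lemma pos_if_coeff_pos: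
  assumes "\<alpha> \<in> R" "\<alpha> = (\<Sum>\<delta>\<in>\<Delta>. c \<delta> *\<^sub>R \<delta>)" "\<gamma> \<in> \<Delta>" "c \<gamma> > 0"
  shows "pos \<alpha>"
proof -
  obtain d where d: "(\<forall>\<delta>\<in>\<Delta>. 0 \<le> d \<delta>) \<or> (\<forall>\<delta>\<in>\<Delta>. d \<delta> \<le> 0)" "\<alpha> = (\<Sum>\<delta>\<in>\<Delta>. d \<delta> *\<^sub>R \<delta>)"
    using root_expansion[OF assms(1)] by blast
  have "d \<gamma> = c \<gamma>" using base_coeff_unique[OF trans[OF sym[OF d(2)] assms(2)] assms(3)] .
  then have "\<forall>\<delta>\<in>\<Delta>. 0 \<le> d \<delta>" using d(1) assms(3,4) by force
  then show ?thesis unfolding positive_root_def using assms(1) d(2) by blast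
qed

lemma pos_in_R: "pos \<alpha> \<Longrightarrow> \<alpha> \<in> R" unfolding positive_root_def by auto

lemma pos_or_pos_uminus: assumes "\<alpha> \<in> R" shows "pos \<alpha> \<or> pos (- \<alpha>)"
proof -
  obtain d where d: "(\<forall>\<delta>\<in>\<Delta>. 0 \<le> d \<delta>) \<or> (\<forall>\<delta>\<in>\<Delta>. d \<delta> \<le> 0)" "\<alpha> = (\<Sum>\<delta>\<in>\<Delta>. d \<delta> *\<^sub>R \<delta>)"
    using root_expansion[OF assms] by blast
  have "- \<alpha> = (\<Sum>\<delta>\<in>\<Delta>. (- d \<delta>) *\<^sub>R \<delta>)" using d(2) by (simp add: sum_negf)
  then show ?thesis
    using d assms uminus_in_R[OF assms] unfolding positive_root_def
    by (metis neg_0_le_iff_le)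
qed

lemma not_pos_and_pos_uminus: assumes "pos \<alpha>" "pos (- \<alpha>)" shows False
proof -
  obtain c where c: "\<forall>\<delta>\<in>\<Delta>. 0 \<le> c \<delta>" "\<alpha> = (\<Sum>\<delta>\<in>\<Delta>. c \<delta> *\<^sub>R \<delta>)"
    using assms(1) unfolding positive_root_def by blast
  obtain d where d: "\<forall>\<delta>\<in>\<Delta>. 0 \<le> d \<delta>" "- \<alpha> = (\<Sum>\<delta>\<in>\<Delta>. d \<delta> *\<^sub>R \<delta>)"
    using assms(2) unfolding positive_root_def by blast
  have "\<alpha> = (\<Sum>\<delta>\<in>\<Delta>. (- d \<delta>) *\<^sub>R \<delta>)"
    using arg_cong[OF d(2), of uminus] by (simp add: sum_negf)
  then have "c \<delta> = - d \<delta>" if "\<delta> \<in> \<Delta>" for \<delta>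
    using base_coeff_unique[of c "\<lambda>\<delta>. - d \<delta>"] c(2) that by simp
  then have "\<forall>\<delta>\<in>\<Delta>. c \<delta> = 0" using c(1) d(1) by force
  then have "\<alpha> = 0" using c(2) by simp
  then show False using root_nonzero[OF pos_in_R[OF assms(1)]] by simp
qed

lemma pos_uminus_iff: "\<alpha> \<in> R \<Longrightarrow> pos (- \<alpha>) \<longleftrightarrow> \<not> pos \<alpha>"
  using pos_or_pos_uminus not_pos_and_pos_uminus by blast

lemma negative_root_iff: "negative_root R \<Delta> \<alpha> \<longleftrightarrow> \<alpha> \<in> R \<and> \<not> pos \<alpha>"
  unfolding negative_root_def using pos_uminus_iff by auto

lemma pos_scaleR:
  assumes "pos \<alpha>" "c > 0" "c *\<^sub>R \<alpha> \<in> R"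
  shows "pos (c *\<^sub>R \<alpha>)"
proof -
  obtain e where e: "\<forall>\<delta>\<in>\<Delta>. 0 \<le> e \<delta>" "\<alpha> = (\<Sum>\<delta>\<in>\<Delta>. e \<delta> *\<^sub>R \<delta>)"
    using assms(1) unfolding positive_root_def by blast
  have "c *\<^sub>R \<alpha> = (\<Sum>\<delta>\<in>\<Delta>. (c * e \<delta>) *\<^sub>R \<delta>)" unfolding e(2) scaleR_sum_right by simp
  moreover have "\<forall>\<delta>\<in>\<Delta>. 0 \<le> c * e \<delta>" using e(1) assms(2) by simp
  ultimately show ?thesis unfolding positive_root_def using assms(3)
    by (intro conjI exI[of _ "\<lambda>\<delta>. c * e \<delta>"]) auto
qed

lemma pos_scaleR_iff:
  assumes "c > 0" "\<alpha> \<in> R" "c *\<^sub>R \<alpha> \<in> R"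
  shows "pos (c *\<^sub>R \<alpha>) \<longleftrightarrow> pos \<alpha>"
proof
  assume "pos (c *\<^sub>R \<alpha>)"
  then have "pos (inverse c *\<^sub>R (c *\<^sub>R \<alpha>))" using pos_scaleR[of "c *\<^sub>R \<alpha>" "inverse c"] assms by simp
  then show "pos \<alpha>" using assms(1) by simp
qed (rule pos_scaleR[OF _ assms(1,3)])

lemma pos_nonneg_combination:
  assumes "v \<in> R" "finite I" "v = (\<Sum>i\<in>I. a i *\<^sub>R \<beta> i)" "\<forall>i\<in>I. a i \<ge> 0 \<and> pos (\<beta> i)"
  shows "pos v"
proof -
  have "\<forall>i\<in>I. \<exists>e. (\<forall>\<delta>\<in>\<Delta>. 0 \<le> e \<delta>) \<and> \<beta> i = (\<Sum>\<delta>\<in>\<Delta>. e \<delta> *\<^sub>R \<delta>)"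
    using assms(4) unfolding positive_root_def by blast
  from bchoice[OF this] obtain e
    where e: "\<forall>i\<in>I. (\<forall>\<delta>\<in>\<Delta>. 0 \<le> e i \<delta>) \<and> \<beta> i = (\<Sum>\<delta>\<in>\<Delta>. e i \<delta> *\<^sub>R \<delta>)"
    by blast
  have "v = (\<Sum>i\<in>I. a i *\<^sub>R (\<Sum>\<delta>\<in>\<Delta>. e i \<delta> *\<^sub>R \<delta>))" unfolding assms(3)
    using e by (intro sum.cong) auto
  also have "\<dots> = (\<Sum>\<delta>\<in>\<Delta>. (\<Sum>i\<in>I. a i * e i \<delta>) *\<^sub>R \<delta>)"
    unfolding scaleR_sum_right scaleR_sum_left scaleR_scaleR by (rule sum.swap)
  finally have v: "v = (\<Sum>\<delta>\<in>\<Delta>. (\<Sum>i\<in>I. a i * e i \<delta>) *\<^sub>R \<delta>)" .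
  have "\<forall>\<delta>\<in>\<Delta>. 0 \<le> (\<Sum>i\<in>I. a i * e i \<delta>)"
    using assms(4) e by (meson mult_nonneg_nonneg sum_nonneg)
  then show ?thesis unfolding positive_root_def using assms(1) v
    by (intro conjI exI[of _ "\<lambda>\<delta>. \<Sum>i\<in>I. a i * e i \<delta>"]) auto
qed

end

section \<open>The Weyl group and words in simple reflections\<close>

context based_root_system
begin

abbreviation W :: "('a \<Rightarrow> 'a) set" where "W \<equiv> weyl_group R"

lemma weyl_isometry: "w \<in> W \<Longrightarrow> linear w \<and> (\<forall>x y. w x \<bullet> w y = x \<bullet> y) \<and> w ` R \<subseteq> R"
proof (induction rule: weyl_group.induct)
  case weyl_id then show ?case by (simp add: linear_id[unfolded id_def])
next
  case (weyl_step w \<alpha>)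
  have "linear (refl \<alpha> \<circ> w)" using weyl_step refl_linear linear_compose by blast
  moreover have "\<forall>x y. (refl \<alpha> \<circ> w) x \<bullet> (refl \<alpha> \<circ> w) y = x \<bullet> y"
    using weyl_step refl_inner[OF root_nonzero[OF weyl_step(2)]] by simp
  moreover have "(refl \<alpha> \<circ> w) ` R \<subseteq> R" using weyl_step refl_in_R by auto
  ultimately show ?case by blast
qed

lemma weyl_linear: "w \<in> W \<Longrightarrow> linear w" using weyl_isometry by blast
lemma weyl_inner: "w \<in> W \<Longrightarrow> w x \<bullet> w y = x \<bullet> y" using weyl_isometry by blast
lemma weyl_root: "w \<in> W \<Longrightarrow> \<alpha> \<in> R \<Longrightarrow> w \<alpha> \<in> R" using weyl_isometry by blast
lemma weyl_scaleR: "w \<in> W \<Longrightarrow> w (c *\<^sub>R x) = c *\<^sub>R w x" using weyl_linear linear_scale by blast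
lemma weyl_uminus: "w \<in> W \<Longrightarrow> w (- x) = - w x" using weyl_linear linear_neg by blast

lemma weyl_inj: assumes "w \<in> W" shows "inj w"
proof (rule injI)
  fix x y assume "w x = w y"
  then have "w (x - y) = 0" using linear_diff[OF weyl_linear[OF assms]] by simp
  then have "(x - y) \<bullet> (x - y) = 0" using weyl_inner[OF assms, of "x - y" "x - y"] by simp
  then show "x = y" by simp
qed

lemma weyl_image_R: assumes "w \<in> W" shows "w ` R = R"
  using endo_inj_surj[OF finite_R _ inj_on_subset[OF weyl_inj[OF assms]]] weyl_root[OF assms] by blast

lemma weyl_comp: "w \<in> W \<Longrightarrow> v \<in> W \<Longrightarrow> w \<circ> v \<in> W"
proof (induction rule: weyl_group.induct)
  case weyl_id then show ?case by simp
next
  case (weyl_step w \<alpha>)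
  then have "refl \<alpha> \<circ> (w \<circ> v) \<in> W" by (intro weyl_group.weyl_step) blast+
  then show ?case by (metis comp_assoc)
qed

lemma simple_word_Nil: "simple_word [] = id" unfolding simple_word_def by simp
lemma simple_word_Cons: "simple_word (\<delta> # ss) = refl \<delta> \<circ> simple_word ss" unfolding simple_word_def by simp
lemma simple_word_append: "simple_word (xs @ ys) = simple_word xs \<circ> simple_word ys"
  by (induction xs) (simp_all add: simple_word_Cons simple_word_Nil comp_assoc)
lemma simple_word_snoc: "simple_word (xs @ [\<delta>]) = simple_word xs \<circ> refl \<delta>"
  by (simp add: simple_word_append simple_word_Cons simple_word_Nil)

lemma simple_word_weyl: "set ss \<subseteq> \<Delta> \<Longrightarrow> simple_word ss \<in> W"
  by (induction ss) (use base_subset_R in \<open>auto simp: simple_word_Nil simple_word_Cons intro: weyl_group.intros\<close>)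

lemma simple_word_rev_comp: "set ss \<subseteq> \<Delta> \<Longrightarrow> simple_word (rev ss) \<circ> simple_word ss = id"
proof (induction ss)
  case Nil then show ?case by (simp add: simple_word_Nil)
next
  case (Cons \<delta> ss)
  have "simple_word (rev (\<delta> # ss)) \<circ> simple_word (\<delta> # ss)
      = simple_word (rev ss) \<circ> (refl \<delta> \<circ> refl \<delta>) \<circ> simple_word ss"
    by (simp add: simple_word_snoc simple_word_Cons comp_assoc)
  also have "refl \<delta> \<circ> refl \<delta> = id"
    using refl_involutive[OF root_nonzero, of \<delta>] Cons.prems base_subset_R by (auto simp: fun_eq_iff)
  finally show ?case using Cons by simp
qed

definition is_word :: "('a \<Rightarrow> 'a) \<Rightarrow> bool" where
  "is_word w \<longleftrightarrow> (\<exists>ss. set ss \<subseteq> \<Delta> \<and> w = simple_word ss)"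

lemma is_word_comp: "is_word a \<Longrightarrow> is_word b \<Longrightarrow> is_word (a \<circ> b)"
  unfolding is_word_def by (metis Un_subset_iff set_append simple_word_append)

lemma is_word_simple_refl: "\<delta> \<in> \<Delta> \<Longrightarrow> is_word (refl \<delta>)"
  unfolding is_word_def by (intro exI[of _ "[\<delta>]"]) (simp add: simple_word_Cons simple_word_Nil)

lemma base_expansion_single: "\<delta> \<in> \<Delta> \<Longrightarrow> (\<Sum>x\<in>\<Delta>. (if x = \<delta> then t else 0) *\<^sub>R x) = t *\<^sub>R \<delta>"
  using finite_base by (simp add: if_distrib[of "\<lambda>t. t *\<^sub>R _"] cong: if_cong)

lemma simple_refl_expansion:
  assumes "\<delta> \<in> \<Delta>" "\<alpha> = (\<Sum>x\<in>\<Delta>. c x *\<^sub>R x)"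
  shows "refl \<delta> \<alpha> = (\<Sum>x\<in>\<Delta>. (c x - (if x = \<delta> then 2 * (\<alpha> \<bullet> \<delta>) / (\<delta> \<bullet> \<delta>) else 0)) *\<^sub>R x)"
proof -
  obtain k where k: "k = 2 * (\<alpha> \<bullet> \<delta>) / (\<delta> \<bullet> \<delta>)" by simp
  have "refl \<delta> \<alpha> = \<alpha> - k *\<^sub>R \<delta>" unfolding refl_def k ..
  also have "\<dots> = (\<Sum>x\<in>\<Delta>. c x *\<^sub>R x) - (\<Sum>x\<in>\<Delta>. (if x = \<delta> then k else 0) *\<^sub>R x)"
    using assms base_expansion_single by simp
  finally show ?thesis unfolding k[symmetric] by (simp add: scaleR_diff_left sum_subtractf)
qed

lemma simple_refl_pos:
  assumes "\<delta> \<in> \<Delta>" "pos \<alpha>" "\<not> (\<exists>c. \<alpha> = c *\<^sub>R \<delta>)"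
  shows "pos (refl \<delta> \<alpha>)"
proof -
  have aR: "\<alpha> \<in> R" using pos_in_R assms by auto
  obtain c where c: "\<alpha> = (\<Sum>x\<in>\<Delta>. c x *\<^sub>R x)" using root_expansion[OF aR] by blast
  have "\<exists>\<gamma>\<in>\<Delta>. \<gamma> \<noteq> \<delta> \<and> c \<gamma> \<noteq> 0"
  proof (rule ccontr)
    assume "\<not> ?thesis"
    then have "(\<Sum>x\<in>\<Delta>-{\<delta>}. c x *\<^sub>R x) = 0" by (intro sum.neutral) auto
    then have "\<alpha> = c \<delta> *\<^sub>R \<delta>" using c sum.remove[OF finite_base assms(1), of "\<lambda>\<gamma>. c \<gamma> *\<^sub>R \<gamma>"] by simp
    then show False using assms(3) by blast
  qed
  then obtain \<gamma> where g: "\<gamma> \<in> \<Delta>" "\<gamma> \<noteq> \<delta>" "c \<gamma> \<noteq> 0" by blast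
  have "c \<gamma> > 0" using pos_coeff_nonneg[OF assms(2) c g(1)] g(3) by simp
  then show ?thesis
    using pos_if_coeff_pos[OF refl_in_R[OF _ aR] simple_refl_expansion[OF assms(1) c] g(1)] g(2) assms(1) base_subset_R
    by auto
qed

lemma pos_acute_simple:
  assumes "pos \<alpha>" "\<alpha> = (\<Sum>\<delta>\<in>\<Delta>. c \<delta> *\<^sub>R \<delta>)"
  obtains \<delta> where "\<delta> \<in> \<Delta>" "c \<delta> > 0" "\<alpha> \<bullet> \<delta> > 0"
proof -
  have ge: "\<forall>\<delta>\<in>\<Delta>. c \<delta> \<ge> 0" using pos_coeff_nonneg[OF assms] by blast
  have "0 < \<alpha> \<bullet> \<alpha>" using root_nonzero[OF pos_in_R[OF assms(1)]] by simp
  also have "\<alpha> \<bullet> \<alpha> = (\<Sum>\<delta>\<in>\<Delta>. c \<delta> * (\<alpha> \<bullet> \<delta>))"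
    by (subst (2) assms(2)) (simp add: inner_sum_right)
  finally obtain \<delta> where d: "\<delta> \<in> \<Delta>" "c \<delta> * (\<alpha> \<bullet> \<delta>) > 0"
    by (metis (no_types, lifting) not_less sum_nonpos)
  then have "c \<delta> > 0" "\<alpha> \<bullet> \<delta> > 0" using ge
    by (metis linorder_neqE_linordered_idom mult_nonneg_nonpos not_le zero_less_mult_iff)+
  with d(1) show ?thesis using that by blast
qed

text \<open>
  Every reflection in a positive root is a word in simple reflections, by induction on the
  height of the root: reflecting in a suitable simple root lowers the height.
\<close>
lemma refl_is_word_pos:
  "pos \<alpha> \<Longrightarrow> \<alpha> = (\<Sum>\<delta>\<in>\<Delta>. c \<delta> *\<^sub>R \<delta>) \<Longrightarrow> \<forall>\<delta>\<in>\<Delta>. c \<delta> \<in> \<int> \<Longrightarrow> sum c \<Delta> \<le> real n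
    \<Longrightarrow> is_word (refl \<alpha>)"
proof (induction n arbitrary: \<alpha> c)
  case 0
  then have "\<forall>\<delta>\<in>\<Delta>. c \<delta> = 0"
    using pos_coeff_nonneg sum_nonneg_eq_0_iff[OF finite_base, of c] sum_nonneg[of \<Delta> c] by force
  then have "\<alpha> = 0" using 0(2) by simp
  then show ?case using 0(1) root_nonzero pos_in_R by blast
next
  case (Suc n \<alpha> c)
  obtain \<delta> where d: "\<delta> \<in> \<Delta>" "c \<delta> > 0" "\<alpha> \<bullet> \<delta> > 0" using pos_acute_simple[OF Suc.prems(1,2)] .
  have dR: "\<delta> \<in> R" using d(1) base_subset_R by auto
  show ?case
  proof (cases "\<exists>t. \<alpha> = t *\<^sub>R \<delta>")
    case True
    then obtain t where "\<alpha> = t *\<^sub>R \<delta>" "t \<noteq> 0" using root_nonzero[OF pos_in_R[OF Suc.prems(1)]] by auto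
    then show ?thesis using refl_scale_root[of t \<delta>] is_word_simple_refl[OF d(1)] by simp
  next
    case False
    define k where "k = 2 * (\<alpha> \<bullet> \<delta>) / (\<delta> \<bullet> \<delta>)"
    have "k \<in> \<int>" "k > 0"
      unfolding k_def using cartan_integer[OF dR pos_in_R[OF Suc.prems(1)]] d(3) root_nonzero[OF dR] by auto
    then have k1: "k \<ge> 1" by (metis Ints_cases of_int_0_less_iff of_int_1_le_iff int_one_le_iff_zero_less)
    define c' where "c' = (\<lambda>x. c x - (if x = \<delta> then k else 0))"
    have "pos (refl \<delta> \<alpha>)" using simple_refl_pos[OF d(1) Suc.prems(1) False] .
    moreover have "refl \<delta> \<alpha> = (\<Sum>x\<in>\<Delta>. c' x *\<^sub>R x)"
      unfolding c'_def k_def using simple_refl_expansion[OF d(1) Suc.prems(2)] .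
    moreover have "\<forall>x\<in>\<Delta>. c' x \<in> \<int>" using Suc.prems(3) \<open>k \<in> \<int>\<close> unfolding c'_def by auto
    moreover have "sum c' \<Delta> = sum c \<Delta> - k" unfolding c'_def using d(1) finite_base by (simp add: sum_subtractf)
    ultimately have "is_word (refl (refl \<delta> \<alpha>))" using Suc.IH Suc.prems(4) k1 by force
    then show ?thesis
      using refl_conj_refl[OF root_nonzero[OF dR], of \<alpha>] is_word_simple_refl[OF d(1)] is_word_comp by metis
  qed
qed

lemma refl_is_word: assumes "\<alpha> \<in> R" shows "is_word (refl \<alpha>)"
proof -
  have "refl (- \<alpha>) = refl \<alpha>" using refl_scale_root[of "-1" \<alpha>] by simp
  then obtain \<beta> where b: "pos \<beta>" "refl \<alpha> = refl \<beta>"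
    using pos_or_pos_uminus[OF assms] by auto
  obtain c where c: "\<forall>\<delta>\<in>\<Delta>. c \<delta> \<in> \<int>" "\<beta> = (\<Sum>\<delta>\<in>\<Delta>. c \<delta> *\<^sub>R \<delta>)"
    using root_expansion[OF pos_in_R[OF b(1)]] by blast
  obtain n :: nat where "sum c \<Delta> \<le> real n" using real_arch_simple by blast
  then show ?thesis using refl_is_word_pos[OF b(1) c(2) c(1)] b(2) by simp
qed

lemma weyl_is_word: "w \<in> W \<Longrightarrow> is_word w"
proof (induction rule: weyl_group.induct)
  case weyl_id then show ?case unfolding is_word_def by (auto intro!: exI[of _ "[]"] simp: simple_word_Nil)
next
  case (weyl_step w \<alpha>) then show ?case using refl_is_word is_word_comp by blast
qed

end

section \<open>Length as the number of inversions\<close>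

context based_root_system
begin

text \<open>
  In a possibly non-reduced root system, roots are counted up to positive multiples by
  restricting to the indivisible ones.
\<close>
definition indivisible :: "'a set" where
  "indivisible = {\<alpha> \<in> R. \<forall>c. 0 < c \<and> c < 1 \<longrightarrow> c *\<^sub>R \<alpha> \<notin> R}"

definition inversions :: "('a \<Rightarrow> 'a) \<Rightarrow> 'a set" where
  "inversions v = {\<alpha> \<in> indivisible. pos \<alpha> \<and> \<not> pos (v \<alpha>)}"

definition n_inv :: "('a \<Rightarrow> 'a) \<Rightarrow> nat" where
  "n_inv v = card (inversions v)"

lemma indivisible_subset_R: "indivisible \<subseteq> R" unfolding indivisible_def by auto
lemma finite_indivisible: "finite indivisible" using finite_subset[OF indivisible_subset_R finite_R] .
lemma finite_inversions: "finite (inversions v)" unfolding inversions_def using finite_indivisible by auto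

text \<open>Roots on the line of a simple root are integral multiples of it, root coordinates being integers.\<close>
lemma simple_multiple_int: assumes "\<delta> \<in> \<Delta>" "c *\<^sub>R \<delta> \<in> R" shows "c \<in> \<int>"
proof -
  obtain d where d: "\<forall>x\<in>\<Delta>. d x \<in> \<int>" "c *\<^sub>R \<delta> = (\<Sum>x\<in>\<Delta>. d x *\<^sub>R x)"
    using root_expansion[OF assms(2)] by blast
  have "(\<Sum>x\<in>\<Delta>. (\<lambda>x. if x = \<delta> then c else 0) x *\<^sub>R x) = (\<Sum>x\<in>\<Delta>. d x *\<^sub>R x)"
    using base_expansion_single[OF assms(1)] d(2) by simp
  from base_coeff_unique[OF this assms(1)] have "c = d \<delta>" by simp
  then show ?thesis using d(1) assms(1) by simp
qed

lemma simple_pos: "\<delta> \<in> \<Delta> \<Longrightarrow> pos \<delta>"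
  using pos_if_coeff_pos[of \<delta> "\<lambda>x. if x = \<delta> then 1 else 0" \<delta>] base_expansion_single[of \<delta> 1] base_subset_R
  by auto

lemma simple_indivisible: assumes "\<delta> \<in> \<Delta>" shows "\<delta> \<in> indivisible"
proof -
  have "c *\<^sub>R \<delta> \<notin> R" if "0 < c" "c < 1" for c :: real
  proof
    assume "c *\<^sub>R \<delta> \<in> R"
    then have "c \<in> \<int>" using simple_multiple_int assms by blast
    then show False using that
      by (metis Ints_cases of_int_0_less_iff of_int_less_1_iff not_less zero_less_imp_eq_int int_one_le_iff_zero_less)
  qed
  then show ?thesis unfolding indivisible_def using assms base_subset_R by auto
qed

lemma simple_multiple_eq:
  assumes "\<delta> \<in> \<Delta>" "\<alpha> \<in> indivisible" "pos \<alpha>" "\<alpha> = c *\<^sub>R \<delta>" shows "\<alpha> = \<delta>"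
proof -
  have aR: "\<alpha> \<in> R" using assms indivisible_subset_R by auto
  have "c \<in> \<int>" using simple_multiple_int assms aR by simp
  moreover have "c \<ge> 0"
    using pos_coeff_nonneg[OF assms(3), of "\<lambda>x. if x = \<delta> then c else 0" \<delta>] base_expansion_single[OF assms(1)] assms
    by simp
  moreover have "c \<noteq> 0" using root_nonzero[OF aR] assms(4) by auto
  ultimately have c1: "c \<ge> 1"
    by (metis Ints_cases less_eq_real_def of_int_0_less_iff of_int_1_le_iff int_one_le_iff_zero_less)
  show ?thesis
  proof (cases "c = 1")
    case False
    then have "0 < inverse c \<and> inverse c < 1" using c1 by (simp add: inverse_less_1_iff)
    moreover have "inverse c *\<^sub>R \<alpha> = \<delta>" using assms(4) c1 by simp
    ultimately show ?thesis using assms(1,2) base_subset_R unfolding indivisible_def by auto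
  qed (use assms in simp)
qed

lemma weyl_indivisible_iff: assumes "w \<in> W" "\<alpha> \<in> R" shows "w \<alpha> \<in> indivisible \<longleftrightarrow> \<alpha> \<in> indivisible"
proof -
  have "c *\<^sub>R w \<alpha> \<in> R \<longleftrightarrow> c *\<^sub>R \<alpha> \<in> R" for c
  proof -
    have "c *\<^sub>R w \<alpha> = w (c *\<^sub>R \<alpha>)" using weyl_scaleR[OF assms(1)] by simp
    moreover have "w x \<in> R \<longleftrightarrow> x \<in> R" for x
      using weyl_image_R[OF assms(1)] weyl_inj[OF assms(1)] by (metis imageE image_eqI injD)
    ultimately show ?thesis by simp
  qed
  then show ?thesis unfolding indivisible_def using weyl_root[OF assms] assms(2) by auto
qed

lemma uminus_indivisible: assumes "\<alpha> \<in> indivisible" shows "- \<alpha> \<in> indivisible"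
proof -
  have "c *\<^sub>R (- \<alpha>) \<notin> R" if "0 < c" "c < 1" for c
  proof
    assume "c *\<^sub>R (- \<alpha>) \<in> R"
    then have "c *\<^sub>R \<alpha> \<in> R" using uminus_in_R by fastforce
    then show False using assms that unfolding indivisible_def by auto
  qed
  then show ?thesis using assms uminus_in_R unfolding indivisible_def by auto
qed

text \<open>Every root is a positive multiple of an indivisible root, by finiteness of R.\<close>
lemma indivisible_multiple: assumes "\<alpha> \<in> R" shows "\<exists>c>0. c *\<^sub>R \<alpha> \<in> indivisible"
proof -
  define C where "C = {c::real. c > 0 \<and> c *\<^sub>R \<alpha> \<in> R}"
  have "inj_on (\<lambda>c. c *\<^sub>R \<alpha>) C" using root_nonzero[OF assms] by (intro inj_onI) simp
  moreover have "(\<lambda>c. c *\<^sub>R \<alpha>) ` C \<subseteq> R" unfolding C_def by auto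
  ultimately have fC: "finite C" by (meson finite_subset[OF _ finite_R] finite_imageD)
  have "1 \<in> C" unfolding C_def using assms by simp
  then have c0C: "Min C \<in> C" using Min_in[OF fC] by auto
  have "Min C *\<^sub>R \<alpha> \<in> indivisible"
    unfolding indivisible_def
  proof (intro CollectI conjI allI impI)
    show "Min C *\<^sub>R \<alpha> \<in> R" using c0C unfolding C_def by simp
    fix d :: real assume d: "0 < d \<and> d < 1"
    show "d *\<^sub>R Min C *\<^sub>R \<alpha> \<notin> R"
    proof
      assume "d *\<^sub>R Min C *\<^sub>R \<alpha> \<in> R"
      then have "d * Min C \<in> C" using d c0C unfolding C_def by simp
      then have "Min C \<le> d * Min C" using Min_le[OF fC] by simp
      moreover have "Min C > 0" using c0C unfolding C_def by simp
      ultimately show False using d by (simp add: mult_le_cancel_right1)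
    qed
  qed
  moreover have "Min C > 0" using c0C unfolding C_def by simp
  ultimately show ?thesis by blast
qed

text \<open>
  A simple reflection permutes the positive indivisible roots other than \<delta>; hence it maps the
  inversions of v other than \<delta> into the inversions of v \<circ> refl \<delta>.
\<close>
lemma simple_refl_inversions:
  assumes v: "v \<in> W" and d: "\<delta> \<in> \<Delta>"
  shows "refl \<delta> ` (inversions v - {\<delta>}) \<subseteq> inversions (v \<circ> refl \<delta>) - {\<delta>}"
proof
  have dR: "\<delta> \<in> R" using d base_subset_R by auto
  fix x assume "x \<in> refl \<delta> ` (inversions v - {\<delta>})"
  then obtain \<alpha> where a: "\<alpha> \<in> inversions v" "\<alpha> \<noteq> \<delta>" "x = refl \<delta> \<alpha>" by blast
  have aI: "\<alpha> \<in> indivisible" "pos \<alpha>" "\<not> pos (v \<alpha>)" using a(1) unfolding inversions_def by auto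
  have aR: "\<alpha> \<in> R" using aI indivisible_subset_R by auto
  have "\<not> (\<exists>c. \<alpha> = c *\<^sub>R \<delta>)" using simple_multiple_eq[OF d aI(1,2)] a(2) by blast
  then have "pos x" using simple_refl_pos[OF d aI(2)] a(3) by simp
  moreover have "x \<in> indivisible"
    using weyl_indivisible_iff[OF weyl_step[OF weyl_id dR] aR] aI a(3) by simp
  moreover have "\<not> pos ((v \<circ> refl \<delta>) x)" using a(3) refl_involutive[OF root_nonzero[OF dR]] aI by simp
  moreover have "x \<noteq> \<delta>"
  proof
    assume "x = \<delta>"
    then have "\<alpha> = - \<delta>" using a(3) refl_involutive[OF root_nonzero[OF dR]] refl_self[OF root_nonzero[OF dR]] by metis
    then show False using aI(2) simple_pos[OF d] not_pos_and_pos_uminus[of \<delta>] by simp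
  qed
  ultimately show "x \<in> inversions (v \<circ> refl \<delta>) - {\<delta>}" unfolding inversions_def by simp
qed

lemma n_inv_simple_refl:
  assumes w: "w \<in> W" and d: "\<delta> \<in> \<Delta>"
  shows "n_inv (w \<circ> refl \<delta>) + (if pos (w \<delta>) then 0 else 1) = n_inv w + (if pos (w \<delta>) then 1 else 0)"
proof -
  let ?s = "refl \<delta>"
  have dR: "\<delta> \<in> R" using d base_subset_R by auto
  have ss: "?s (?s x) = x" for x using refl_involutive[OF root_nonzero[OF dR]] .
  have sW: "?s \<in> W" using weyl_step[OF weyl_id dR] by simp
  have "w \<circ> ?s \<circ> ?s = w" using ss by (auto simp: fun_eq_iff)
  then have reverse_inclusion: "?s ` (inversions (w \<circ> ?s) - {\<delta>}) \<subseteq> inversions w - {\<delta>}"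
    using simple_refl_inversions[OF weyl_comp[OF w sW] d] by simp
  have "?s ` (inversions w - {\<delta>}) = inversions (w \<circ> ?s) - {\<delta>}"
  proof
    show "inversions (w \<circ> ?s) - {\<delta>} \<subseteq> ?s ` (inversions w - {\<delta>})"
    proof
      fix x assume "x \<in> inversions (w \<circ> ?s) - {\<delta>}"
      then have "?s x \<in> inversions w - {\<delta>}" using reverse_inclusion by blast
      then show "x \<in> ?s ` (inversions w - {\<delta>})" using ss by (metis image_eqI)
    qed
  qed (rule simple_refl_inversions[OF w d])
  then have same: "card (inversions (w \<circ> ?s) - {\<delta>}) = card (inversions w - {\<delta>})"
    by (metis card_image inj_on_subset weyl_inj[OF sW] subset_UNIV)
  have "\<delta> \<in> inversions (w \<circ> ?s) \<longleftrightarrow> pos (w \<delta>)"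
    using simple_indivisible[OF d] simple_pos[OF d] refl_self[OF root_nonzero[OF dR]]
      weyl_uminus[OF w] pos_uminus_iff[OF weyl_root[OF w dR]]
    unfolding inversions_def by simp
  then have c1: "card (inversions (w \<circ> ?s)) = card (inversions (w \<circ> ?s) - {\<delta>}) + (if pos (w \<delta>) then 1 else 0)"
    using card.remove[OF finite_inversions, of \<delta> "w \<circ> ?s"] by auto
  have "\<delta> \<in> inversions w \<longleftrightarrow> \<not> pos (w \<delta>)"
    using simple_indivisible[OF d] simple_pos[OF d] unfolding inversions_def by simp
  then have c2: "card (inversions w) = card (inversions w - {\<delta>}) + (if pos (w \<delta>) then 0 else 1)"
    using card.remove[OF finite_inversions, of \<delta> w] by auto
  show ?thesis unfolding n_inv_def c1 c2 same by simp
qed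

lemma n_inv_simple_refl_le: "w \<in> W \<Longrightarrow> \<delta> \<in> \<Delta> \<Longrightarrow> n_inv (w \<circ> refl \<delta>) \<le> n_inv w + 1"
  using n_inv_simple_refl[of w \<delta>] by (cases "pos (w \<delta>)") simp_all

lemma n_inv_simple_refl_pos: "w \<in> W \<Longrightarrow> \<delta> \<in> \<Delta> \<Longrightarrow> pos (w \<delta>) \<Longrightarrow> n_inv (w \<circ> refl \<delta>) = n_inv w + 1"
  using n_inv_simple_refl[of w \<delta>] by simp

lemma n_inv_simple_refl_neg: "w \<in> W \<Longrightarrow> \<delta> \<in> \<Delta> \<Longrightarrow> \<not> pos (w \<delta>) \<Longrightarrow> n_inv (w \<circ> refl \<delta>) < n_inv w"
  using n_inv_simple_refl[of w \<delta>] by simp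

lemma n_inv_id: "n_inv (\<lambda>x. x) = 0" unfolding n_inv_def inversions_def by simp

lemma n_inv_le_length: "set ss \<subseteq> \<Delta> \<Longrightarrow> n_inv (simple_word ss) \<le> length ss"
proof (induction ss rule: rev_induct)
  case Nil then show ?case by (simp add: simple_word_Nil n_inv_id)
next
  case (snoc \<delta> ss)
  then have ss: "set ss \<subseteq> \<Delta>" and d: "\<delta> \<in> \<Delta>" by auto
  have "n_inv (simple_word ss \<circ> refl \<delta>) \<le> n_inv (simple_word ss) + 1"
    using n_inv_simple_refl_le[OF simple_word_weyl[OF ss] d] .
  then show ?case unfolding simple_word_snoc length_append_singleton using snoc.IH[OF ss] by linarith
qed

lemma n_inv_prefix:
  assumes "set ss \<subseteq> \<Delta>" "\<forall>j<length ss. pos (simple_word (take j ss) (ss ! j))" "j \<le> length ss"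
  shows "n_inv (simple_word (take j ss)) = j"
  using assms(3)
proof (induction j)
  case 0 then show ?case by (simp add: simple_word_Nil n_inv_id)
next
  case (Suc j)
  then have jl: "j < length ss" by simp
  have "set (take j ss) \<subseteq> \<Delta>" "ss ! j \<in> \<Delta>"
    using assms(1) jl by (auto dest: in_set_takeD)
  then have "n_inv (simple_word (take j ss) \<circ> refl (ss ! j)) = n_inv (simple_word (take j ss)) + 1"
    using n_inv_simple_refl_pos[OF simple_word_weyl] assms(2) jl by blast
  then show ?case unfolding take_Suc_conv_app_nth[OF jl] simple_word_snoc using Suc by linarith
qed

lemma exists_switch: "f j \<Longrightarrow> \<not> f (0::nat) \<Longrightarrow> \<exists>i<j. f (Suc i) \<and> \<not> f i"
  by (induction j) (auto intro: less_SucI)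

lemma exchange:
  assumes ss: "set ss \<subseteq> \<Delta>" and d: "\<delta> \<in> \<Delta>" and neg: "\<not> pos (simple_word ss \<delta>)"
  shows "\<exists>i<length ss. simple_word ss \<circ> refl \<delta> = simple_word (take i ss @ drop (Suc i) ss)"
proof -
  define u where "u i = simple_word (drop i ss)" for i
  have uW: "u i \<in> W" for i unfolding u_def by (rule simple_word_weyl) (use ss in \<open>auto dest: in_set_dropD\<close>)
  have dR: "\<delta> \<in> R" using d base_subset_R by auto
  have "\<exists>i<length ss. pos (u (Suc i) \<delta>) \<and> \<not> pos (u i \<delta>)"
    by (rule exists_switch[where f = "\<lambda>i. pos (u i \<delta>)"])
      (use simple_pos[OF d] neg in \<open>simp_all add: u_def simple_word_Nil\<close>)
  then obtain i where i: "i < length ss" "pos (u (Suc i) \<delta>)" "\<not> pos (u i \<delta>)" by blast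
  have siD: "ss ! i \<in> \<Delta>" using ss i(1) nth_mem by blast
  have ui: "u i = refl (ss ! i) \<circ> u (Suc i)"
    unfolding u_def using i(1) by (simp add: Cons_nth_drop_Suc[symmetric] simple_word_Cons)
  define \<beta> where "\<beta> = u (Suc i) \<delta>"
  have "\<not> pos (refl (ss ! i) \<beta>)" using i(3) ui unfolding \<beta>_def by simp
  then obtain c where c: "\<beta> = c *\<^sub>R (ss ! i)" using simple_refl_pos[OF siD i(2)[folded \<beta>_def]] by blast
  have "c \<noteq> 0" using c root_nonzero[OF weyl_root[OF uW dR]] unfolding \<beta>_def by auto
  then have "refl \<beta> = refl (ss ! i)" using c refl_scale_root by simp
  moreover have "u (Suc i) \<circ> refl \<delta> = refl \<beta> \<circ> u (Suc i)" unfolding \<beta>_def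
    using refl_conj_comp[OF weyl_linear[OF uW] weyl_inner[OF uW]] .
  moreover have "refl (ss ! i) \<circ> refl (ss ! i) = id"
    using refl_involutive[OF root_nonzero] siD base_subset_R by (auto simp: fun_eq_iff)
  ultimately have "u i \<circ> refl \<delta> = u (Suc i)" unfolding ui by (metis comp_assoc id_comp)
  moreover have "simple_word ss = simple_word (take i ss) \<circ> u i"
    unfolding u_def by (simp flip: simple_word_append)
  ultimately show ?thesis using i(1) unfolding u_def by (auto simp: simple_word_append comp_assoc)
qed

lemma deletion:
  assumes ss: "set ss \<subseteq> \<Delta>" and lt: "n_inv (simple_word ss) < length ss"
  shows "\<exists>ts. set ts \<subseteq> \<Delta> \<and> simple_word ts = simple_word ss \<and> length ts < length ss"
proof -
  obtain j where j: "j < length ss" "\<not> pos (simple_word (take j ss) (ss ! j))"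
    using n_inv_prefix[OF ss _ order_refl] lt by force
  have tj: "set (take j ss) \<subseteq> \<Delta>" and sj: "ss ! j \<in> \<Delta>" using ss j(1) by (auto dest: in_set_takeD)
  obtain i where i: "i < j"
    "simple_word (take j ss) \<circ> refl (ss ! j) = simple_word (take i (take j ss) @ drop (Suc i) (take j ss))"
    using exchange[OF tj sj j(2)] j(1) by auto
  define ts where "ts = (take i (take j ss) @ drop (Suc i) (take j ss)) @ drop (Suc j) ss"
  have "ss = take j ss @ [ss ! j] @ drop (Suc j) ss"
    using j(1) by (simp add: Cons_nth_drop_Suc)
  then have "simple_word ss = simple_word (take j ss) \<circ> refl (ss ! j) \<circ> simple_word (drop (Suc j) ss)"
    by (metis simple_word_append simple_word_snoc append_assoc append_Cons append_Nil)
  moreover have "simple_word ts = simple_word (take j ss) \<circ> refl (ss ! j) \<circ> simple_word (drop (Suc j) ss)"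
    unfolding ts_def simple_word_append[of "take i (take j ss) @ drop (Suc i) (take j ss)"] i(2) ..
  ultimately have "simple_word ts = simple_word ss" by simp
  moreover have "set ts \<subseteq> \<Delta>" unfolding ts_def using ss by (auto dest: in_set_takeD in_set_dropD)
  moreover have "length ts < length ss" unfolding ts_def using i(1) j(1) by simp
  ultimately show ?thesis by blast
qed

lemma len_simple_word: assumes "set ss \<subseteq> \<Delta>" shows "len \<Delta> (simple_word ss) = n_inv (simple_word ss)"
proof -
  let ?Q = "\<lambda>n. \<exists>ts. length ts = n \<and> set ts \<subseteq> \<Delta> \<and> simple_word ss = simple_word ts"
  have "?Q (len \<Delta> (simple_word ss))" unfolding len_def by (rule LeastI_ex) (use assms in blast)
  then obtain ts where ts: "length ts = len \<Delta> (simple_word ss)" "set ts \<subseteq> \<Delta>" "simple_word ss = simple_word ts"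
    by blast
  have "n_inv (simple_word ss) \<le> len \<Delta> (simple_word ss)" using n_inv_le_length[OF ts(2)] ts by simp
  moreover have "\<not> n_inv (simple_word ss) < len \<Delta> (simple_word ss)"
  proof
    assume "n_inv (simple_word ss) < len \<Delta> (simple_word ss)"
    then obtain us where us: "set us \<subseteq> \<Delta>" "simple_word us = simple_word ts" "length us < length ts"
      using deletion[OF ts(2)] ts by auto
    then have "len \<Delta> (simple_word ss) \<le> length us" unfolding len_def using ts(3) by (intro Least_le) auto
    then show False using us ts by simp
  qed
  ultimately show ?thesis by simp
qed

lemma len_weyl: assumes "w \<in> W" shows "len \<Delta> w = n_inv w"
  using weyl_is_word[OF assms] len_simple_word unfolding is_word_def by blast

end

context based_root_system
begin

lemma weyl_image_indivisible: assumes "w \<in> W" shows "w ` indivisible = indivisible"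
proof
  show "w ` indivisible \<subseteq> indivisible" using weyl_indivisible_iff[OF assms] indivisible_subset_R by auto
  show "indivisible \<subseteq> w ` indivisible"
  proof
    fix b assume b: "b \<in> indivisible"
    then obtain a where "a \<in> R" "b = w a" using weyl_image_R[OF assms] indivisible_subset_R by blast
    then show "b \<in> w ` indivisible" using weyl_indivisible_iff[OF assms] b by auto
  qed
qed

lemma card_sign_changes_len:
  assumes "w \<in> W" shows "card {\<alpha> \<in> indivisible. pos \<alpha> \<noteq> pos (w \<alpha>)} = 2 * len \<Delta> w"
  unfolding len_weyl[OF assms] n_inv_def inversions_def
proof (rule card_sign_changes_double[where neg = uminus])
  show "- \<alpha> \<in> indivisible" "pos (- \<alpha>) \<longleftrightarrow> \<not> pos \<alpha>" "w \<alpha> \<in> indivisible" if "\<alpha> \<in> indivisible" for \<alpha>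
    using that uminus_indivisible pos_uminus_iff indivisible_subset_R weyl_image_indivisible[OF assms] by auto
qed (use finite_indivisible weyl_uminus[OF assms] in auto)

definition changes_sign_twice :: "('a \<Rightarrow> 'a) \<Rightarrow> ('a \<Rightarrow> 'a) \<Rightarrow> 'a \<Rightarrow> bool" where
  "changes_sign_twice w w' \<alpha> \<longleftrightarrow> pos \<alpha> \<noteq> pos (w' \<alpha>) \<and> pos (w' \<alpha>) \<noteq> pos (w (w' \<alpha>))"

lemma changes_sign_twice_scaleR:
  assumes w: "w \<in> W" and w': "w' \<in> W" and a: "\<alpha> \<in> R" and c: "c > 0" "c *\<^sub>R \<alpha> \<in> R"
  shows "changes_sign_twice w w' (c *\<^sub>R \<alpha>) \<longleftrightarrow> changes_sign_twice w w' \<alpha>"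
proof -
  have "w' (c *\<^sub>R \<alpha>) = c *\<^sub>R w' \<alpha>" "w (c *\<^sub>R w' \<alpha>) = c *\<^sub>R w (w' \<alpha>)"
    using weyl_scaleR[OF w'] weyl_scaleR[OF w] by simp_all
  moreover have "c *\<^sub>R w' \<alpha> \<in> R" "c *\<^sub>R w (w' \<alpha>) \<in> R" "w' \<alpha> \<in> R" "w (w' \<alpha>) \<in> R"
    using weyl_root[OF w' c(2)] weyl_root[OF w weyl_root[OF w' c(2)]] weyl_root[OF w' a] weyl_root[OF w weyl_root[OF w' a]]
      calculation by simp_all
  ultimately show ?thesis unfolding changes_sign_twice_def using pos_scaleR_iff c a by simp
qed

lemma len_additive_iff:
  assumes w: "w \<in> W" and w': "w' \<in> W"
  shows "len \<Delta> (w \<circ> w') = len \<Delta> w + len \<Delta> w' \<longleftrightarrow> \<not> (\<exists>\<alpha>\<in>R. changes_sign_twice w w' \<alpha>)"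
proof -
  have bij: "bij_betw w' indivisible indivisible"
    using weyl_image_indivisible[OF w'] weyl_inj[OF w'] by (simp add: bij_betw_def inj_on_subset[of _ UNIV])
  have "len \<Delta> (w \<circ> w') = len \<Delta> w + len \<Delta> w' \<longleftrightarrow> card {\<alpha> \<in> indivisible. changes_sign_twice w w' \<alpha>} = 0"
    using card_sign_changes_comp[OF finite_indivisible bij, of pos w]
      card_sign_changes_len[OF w] card_sign_changes_len[OF w'] card_sign_changes_len[OF weyl_comp[OF w w']]
    unfolding changes_sign_twice_def by auto
  also have "\<dots> \<longleftrightarrow> \<not> (\<exists>\<alpha>\<in>indivisible. changes_sign_twice w w' \<alpha>)"
    using finite_indivisible by auto
  also have "\<dots> \<longleftrightarrow> \<not> (\<exists>\<alpha>\<in>R. changes_sign_twice w w' \<alpha>)"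
  proof
    assume none: "\<not> (\<exists>\<alpha>\<in>indivisible. changes_sign_twice w w' \<alpha>)"
    show "\<not> (\<exists>\<alpha>\<in>R. changes_sign_twice w w' \<alpha>)"
    proof
      assume "\<exists>\<alpha>\<in>R. changes_sign_twice w w' \<alpha>"
      then obtain \<alpha> where a: "\<alpha> \<in> R" "changes_sign_twice w w' \<alpha>" by blast
      obtain c where "c > 0" "c *\<^sub>R \<alpha> \<in> indivisible" using indivisible_multiple[OF a(1)] by blast
      then show False using none changes_sign_twice_scaleR[OF w w' a(1)] a(2) indivisible_subset_R by auto
    qed
  qed (use indivisible_subset_R in auto)
  finally show ?thesis .
qed

end

section \<open>The standard Levi subgroup and restriction to A_M\<close>

locale levi_setting = based_root_system +
  fixes \<Theta> :: "'a set"
  assumes Theta_subset: "\<Theta> \<subseteq> \<Delta>"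
begin

abbreviation levi :: "'a set" where "levi \<equiv> levi_roots R \<Theta>"
abbreviation res :: "'a \<Rightarrow> 'a \<Rightarrow> real" where "res \<equiv> resM \<Theta>"

lemma finite_Theta: "finite \<Theta>" using finite_subset[OF Theta_subset finite_base] .
lemma levi_iff: "\<alpha> \<in> levi \<longleftrightarrow> \<alpha> \<in> R \<and> \<alpha> \<in> span \<Theta>" unfolding levi_roots_def by auto
lemma Theta_subset_levi: "\<Theta> \<subseteq> levi" using Theta_subset base_subset_R span_superset unfolding levi_roots_def by auto

lemma span_orthogonal_aM: assumes "v \<in> span \<Theta>" "x \<in> aM \<Theta>" shows "v \<bullet> x = 0"
proof -
  have "orthogonal x v"
    by (rule orthogonal_to_span[OF assms(1)]) (use assms(2) in \<open>auto simp: aM_def orthogonal_def inner_commute\<close>)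
  then show ?thesis by (simp add: orthogonal_def inner_commute)
qed

lemma orthogonal_aM_in_span: assumes "\<forall>x\<in>aM \<Theta>. u \<bullet> x = 0" shows "u \<in> span \<Theta>"
proof -
  obtain y z where yz: "y \<in> span \<Theta>" "\<And>w. w \<in> span \<Theta> \<Longrightarrow> orthogonal z w" "u = y + z"
    using orthogonal_subspace_decomp_exists[of \<Theta> u] by blast
  have "z \<in> aM \<Theta>" unfolding aM_def using yz(2) span_base by (auto simp: orthogonal_def inner_commute)
  then have "u \<bullet> z = 0" using assms by blast
  moreover have "y \<bullet> z = 0" using yz(2)[OF yz(1)] by (simp add: orthogonal_def inner_commute)
  ultimately have "z \<bullet> z = 0" using yz(3) by (simp add: inner_add_left)
  then show ?thesis using yz by simp
qed

lemma resM_multiple_iff: "(\<forall>x\<in>aM \<Theta>. res \<alpha> x = c * res \<beta> x) \<longleftrightarrow> \<alpha> - c *\<^sub>R \<beta> \<in> span \<Theta>"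
proof
  assume "\<forall>x\<in>aM \<Theta>. res \<alpha> x = c * res \<beta> x"
  then have "\<forall>x\<in>aM \<Theta>. (\<alpha> - c *\<^sub>R \<beta>) \<bullet> x = 0" by (simp add: resM_def inner_diff_left)
  then show "\<alpha> - c *\<^sub>R \<beta> \<in> span \<Theta>" by (rule orthogonal_aM_in_span)
next
  assume "\<alpha> - c *\<^sub>R \<beta> \<in> span \<Theta>"
  then have "\<forall>x\<in>aM \<Theta>. (\<alpha> - c *\<^sub>R \<beta>) \<bullet> x = 0" using span_orthogonal_aM by blast
  then show "\<forall>x\<in>aM \<Theta>. res \<alpha> x = c * res \<beta> x" by (simp add: resM_def inner_diff_left)
qed

lemma resM_eq_iff: "res \<alpha> = res \<beta> \<longleftrightarrow> \<alpha> - \<beta> \<in> span \<Theta>"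
proof -
  have "res \<alpha> = res \<beta> \<longleftrightarrow> (\<forall>x\<in>aM \<Theta>. res \<alpha> x = 1 * res \<beta> x)"
    unfolding resM_def by (metis mult_1 restrict_apply' restrict_ext)
  then show ?thesis using resM_multiple_iff[of \<alpha> 1 \<beta>] by simp
qed

lemma resM_zero_iff: "res \<alpha> = res 0 \<longleftrightarrow> \<alpha> \<in> span \<Theta>" using resM_eq_iff[of \<alpha> 0] by simp

lemma coeff_outside_Theta:
  assumes "\<alpha> = (\<Sum>\<delta>\<in>\<Delta>. c \<delta> *\<^sub>R \<delta>)" "\<beta> = (\<Sum>\<delta>\<in>\<Delta>. d \<delta> *\<^sub>R \<delta>)" "\<alpha> - k *\<^sub>R \<beta> \<in> span \<Theta>"
    "\<gamma> \<in> \<Delta>" "\<gamma> \<notin> \<Theta>"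
  shows "c \<gamma> = k * d \<gamma>"
proof -
  obtain e where e: "\<alpha> - k *\<^sub>R \<beta> = (\<Sum>\<delta>\<in>\<Theta>. e \<delta> *\<^sub>R \<delta>)"
    using assms(3) span_finite[OF finite_Theta] by blast
  define e' where "e' = (\<lambda>\<delta>. if \<delta> \<in> \<Theta> then e \<delta> else 0)"
  have "(\<Sum>\<delta>\<in>\<Delta>. e' \<delta> *\<^sub>R \<delta>) = (\<Sum>\<delta>\<in>\<Theta>. e' \<delta> *\<^sub>R \<delta>)"
    using finite_base Theta_subset by (intro sum.mono_neutral_right) (auto simp: e'_def)
  also have "\<dots> = \<alpha> - k *\<^sub>R \<beta>" unfolding e e'_def by (intro sum.cong) auto
  also have "\<dots> = (\<Sum>\<delta>\<in>\<Delta>. (c \<delta> - k * d \<delta>) *\<^sub>R \<delta>)"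
    unfolding assms(1,2) by (simp add: scaleR_diff_left sum_subtractf scaleR_sum_right)
  finally have "e' \<gamma> = c \<gamma> - k * d \<gamma>"
    using base_coeff_unique[of e' "\<lambda>\<delta>. c \<delta> - k * d \<delta>", OF _ assms(4)] by simp
  then show ?thesis using assms(5) unfolding e'_def by simp
qed

lemma exists_coeff_outside_Theta:
  assumes "\<alpha> = (\<Sum>\<delta>\<in>\<Delta>. c \<delta> *\<^sub>R \<delta>)" "\<alpha> \<notin> span \<Theta>"
  shows "\<exists>\<gamma>\<in>\<Delta> - \<Theta>. c \<gamma> \<noteq> 0"
proof (rule ccontr)
  assume "\<not> ?thesis"
  then have "\<alpha> = (\<Sum>\<delta>\<in>\<Theta>. c \<delta> *\<^sub>R \<delta>)"
    unfolding assms(1) using finite_base Theta_subset by (intro sum.mono_neutral_right) auto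
  then have "\<alpha> \<in> span \<Theta>" by (simp add: span_sum span_scale span_base)
  then show False using assms(2) by simp
qed

text \<open>
  The sign of a root outside the Levi is read off from a coordinate outside \<Theta>; hence
  roots that are positively proportional modulo span \<Theta> have the same sign.
\<close>
lemma pos_congruent:
  assumes "\<alpha> \<in> R" "\<beta> \<in> R" "\<alpha> \<notin> span \<Theta>" "k > 0" "\<alpha> - k *\<^sub>R \<beta> \<in> span \<Theta>"
  shows "pos \<alpha> \<longleftrightarrow> pos \<beta>"
proof -
  obtain c where c: "\<alpha> = (\<Sum>\<delta>\<in>\<Delta>. c \<delta> *\<^sub>R \<delta>)" using root_expansion[OF assms(1)] by blast
  obtain d where d: "\<beta> = (\<Sum>\<delta>\<in>\<Delta>. d \<delta> *\<^sub>R \<delta>)" using root_expansion[OF assms(2)] by blast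
  obtain \<gamma> where g: "\<gamma> \<in> \<Delta>" "\<gamma> \<notin> \<Theta>" "c \<gamma> \<noteq> 0" using exists_coeff_outside_Theta[OF c assms(3)] by blast
  have cd: "c \<gamma> = k * d \<gamma>" using coeff_outside_Theta[OF c d assms(5) g(1,2)] .
  show ?thesis
  proof (cases "c \<gamma> > 0")
    case True
    then have "d \<gamma> > 0" using cd assms(4) by (simp add: zero_less_mult_iff)
    then show ?thesis using pos_if_coeff_pos[OF assms(1) c g(1) True] pos_if_coeff_pos[OF assms(2) d g(1)] by simp
  next
    case False
    then have "c \<gamma> < 0" using g(3) by simp
    moreover from this have "d \<gamma> < 0" using cd assms(4) by (auto simp: mult_less_0_iff)
    ultimately
    show ?thesis using pos_coeff_nonneg[OF _ c g(1)] pos_coeff_nonneg[OF _ d g(1)] by fastforce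
  qed
qed

end

context levi_setting
begin

definition normalizes :: "('a \<Rightarrow> 'a) \<Rightarrow> bool" where
  "normalizes v \<longleftrightarrow> v \<in> W \<and> v ` levi = levi"

lemma normalizes_weyl: "normalizes v \<Longrightarrow> v \<in> W" unfolding normalizes_def by simp

lemma normalizes_root: "normalizes v \<Longrightarrow> \<alpha> \<in> R \<Longrightarrow> v \<alpha> \<in> R" using weyl_root normalizes_weyl by blast

lemma normalizes_span: assumes "normalizes v" "u \<in> span \<Theta>" shows "v u \<in> span \<Theta>"
proof -
  have "v ` \<Theta> \<subseteq> span \<Theta>" using assms(1) Theta_subset_levi unfolding normalizes_def levi_roots_def by auto
  then have "v ` span \<Theta> \<subseteq> span \<Theta>"
    using span_linear_image[OF weyl_linear[OF normalizes_weyl[OF assms(1)]], of \<Theta>] span_minimal[OF _ subspace_span]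
    by metis
  then show ?thesis using assms(2) by blast
qed

lemma normalizes_comp: "normalizes w \<Longrightarrow> normalizes w' \<Longrightarrow> normalizes (w \<circ> w')"
  unfolding normalizes_def using weyl_comp image_comp[of w w' levi] by metis

text \<open>Normalizers are closed under inversion (the inverse of a word is the reversed word).\<close>
lemma normalizes_inverse:
  assumes "normalizes v" shows "\<exists>u. normalizes u \<and> (\<forall>x. u (v x) = x) \<and> (\<forall>x. v (u x) = x)"
proof -
  obtain ss where ss: "set ss \<subseteq> \<Delta>" "v = simple_word ss"
    using weyl_is_word normalizes_weyl[OF assms] unfolding is_word_def by blast
  define u where "u = simple_word (rev ss)"
  have uv: "\<forall>x. u (v x) = x" using simple_word_rev_comp[OF ss(1)] ss(2) unfolding u_def by (metis comp_apply id_apply)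
  have vu: "\<forall>x. v (u x) = x" using simple_word_rev_comp[of "rev ss"] ss unfolding u_def by (metis comp_apply id_apply rev_rev_ident set_rev)
  have "u ` levi = u ` (v ` levi)" using assms unfolding normalizes_def by simp
  also have "\<dots> = levi" using uv by (simp add: image_image)
  finally show ?thesis using simple_word_weyl[of "rev ss"] ss(1) uv vu unfolding normalizes_def u_def by auto
qed

lemma normalizes_nonlevi: assumes "normalizes v" "\<alpha> \<in> R" "\<alpha> \<notin> span \<Theta>" shows "v \<alpha> \<notin> span \<Theta>"
proof
  assume "v \<alpha> \<in> span \<Theta>"
  then have "v \<alpha> \<in> v ` levi" using normalizes_root[OF assms(1,2)] assms(1) levi_iff unfolding normalizes_def by simp
  then have "\<alpha> \<in> levi" using weyl_inj[OF normalizes_weyl[OF assms(1)]] by (auto simp: inj_eq)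
  then show False using assms(3) levi_iff by simp
qed

lemma normalizes_congruent:
  assumes "normalizes v" "\<alpha> - k *\<^sub>R \<beta> \<in> span \<Theta>" shows "v \<alpha> - k *\<^sub>R v \<beta> \<in> span \<Theta>"
proof -
  have "linear v" using assms(1) weyl_linear normalizes_weyl by blast
  then have "v (\<alpha> - k *\<^sub>R \<beta>) = v \<alpha> - k *\<^sub>R v \<beta>" using linear_diff linear_scale by metis
  then show ?thesis using normalizes_span[OF assms] by simp
qed

abbreviation WM :: "('a \<Rightarrow> 'a) set" where "WM \<equiv> W_M R \<Delta> \<Theta>"

lemma WM_normalizes: "w \<in> WM \<Longrightarrow> normalizes w" unfolding W_M_def normalizes_def by simp

text \<open>Minimality of the length in w W^M forces w to keep the simple roots of M positive.\<close>
lemma WM_simple_pos: assumes w: "w \<in> WM" and d: "\<delta> \<in> \<Theta>" shows "pos (w \<delta>)"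
proof (rule ccontr)
  assume "\<not> pos (w \<delta>)"
  have wW: "w \<in> W" using w unfolding W_M_def by simp
  have dD: "\<delta> \<in> \<Delta>" using d Theta_subset by auto
  have "refl \<delta> \<circ> id \<in> weyl_group levi" using d Theta_subset_levi by (intro weyl_group.intros) auto
  then have "len \<Delta> w \<le> len \<Delta> (w \<circ> refl \<delta>)" using w unfolding W_M_def by auto
  moreover have "w \<circ> refl \<delta> \<in> W" using weyl_comp[OF wW weyl_step[OF weyl_id]] dD base_subset_R by auto
  ultimately show False
    using n_inv_simple_refl_neg[OF wW dD \<open>\<not> pos (w \<delta>)\<close>] len_weyl[OF wW] len_weyl by fastforce
qed

lemma WM_levi_pos: assumes w: "w \<in> WM" and a: "\<alpha> \<in> levi" "pos \<alpha>" shows "pos (w \<alpha>)"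
proof -
  have wW: "w \<in> W" using w unfolding W_M_def by simp
  have aR: "\<alpha> \<in> R" and aT: "\<alpha> \<in> span \<Theta>" using a levi_iff by auto
  obtain c where c: "\<alpha> = (\<Sum>\<delta>\<in>\<Delta>. c \<delta> *\<^sub>R \<delta>)" using root_expansion[OF aR] by blast
  have zero: "(0::'a) = (\<Sum>\<delta>\<in>\<Delta>. (\<lambda>_. 0::real) \<delta> *\<^sub>R \<delta>)" by simp
  have "c \<gamma> = 0" if "\<gamma> \<in> \<Delta> - \<Theta>" for \<gamma>
    using coeff_outside_Theta[OF c zero, of 1 \<gamma>] aT that by simp
  then have "\<alpha> = (\<Sum>\<delta>\<in>\<Theta>. c \<delta> *\<^sub>R \<delta>)" unfolding c
    using finite_base Theta_subset by (intro sum.mono_neutral_right) auto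
  then have "w \<alpha> = (\<Sum>\<delta>\<in>\<Theta>. c \<delta> *\<^sub>R w \<delta>)"
    by (simp add: linear_sum[OF weyl_linear[OF wW]] linear_scale[OF weyl_linear[OF wW]])
  moreover have "\<forall>\<delta>\<in>\<Theta>. c \<delta> \<ge> 0 \<and> pos (w \<delta>)"
    using pos_coeff_nonneg[OF a(2) c] Theta_subset WM_simple_pos[OF w] by auto
  ultimately show ?thesis using pos_nonneg_combination[OF weyl_root[OF wW aR] finite_Theta] by blast
qed

lemma WM_levi_pos_iff: assumes w: "w \<in> WM" and a: "\<alpha> \<in> levi" shows "pos (w \<alpha>) \<longleftrightarrow> pos \<alpha>"
proof
  have wW: "w \<in> W" using w unfolding W_M_def by simp
  have aR: "\<alpha> \<in> R" using a levi_iff by auto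
  have "- \<alpha> \<in> levi" using a uminus_in_R span_neg levi_iff by auto
  assume "pos (w \<alpha>)"
  then show "pos \<alpha>"
    using WM_levi_pos[OF w \<open>- \<alpha> \<in> levi\<close>] pos_uminus_iff[OF aR] weyl_uminus[OF wW] not_pos_and_pos_uminus
    by metis
qed (rule WM_levi_pos[OF w a])

end

section \<open>The roots of A_M\<close>

context levi_setting
begin

abbreviation rootsM :: "('a \<Rightarrow> real) set" where "rootsM \<equiv> roots_AM R \<Theta>"

definition reducedM :: "('a \<Rightarrow> real) set" where "reducedM = {\<beta>. reduced_AM R \<Theta> \<beta>}"

lemma rootsM_iff: "\<beta> \<in> rootsM \<longleftrightarrow> (\<exists>\<alpha>. \<alpha> \<in> R \<and> \<alpha> \<notin> span \<Theta> \<and> \<beta> = res \<alpha>)"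
  unfolding roots_AM_def using resM_zero_iff by auto

lemma finite_rootsM: "finite rootsM" unfolding roots_AM_def using finite_R by simp

lemma reducedM_subset: "reducedM \<subseteq> rootsM" unfolding reducedM_def reduced_AM_def by auto

lemma finite_reducedM: "finite reducedM" using finite_subset[OF reducedM_subset finite_rootsM] .

lemma reduced_res_iff:
  assumes "\<alpha> \<in> R" "\<alpha> \<notin> span \<Theta>"
  shows "res \<alpha> \<in> reducedM \<longleftrightarrow> (\<forall>\<gamma>\<in>R. \<gamma> \<notin> span \<Theta> \<longrightarrow> (\<forall>c>1. \<alpha> - c *\<^sub>R \<gamma> \<notin> span \<Theta>))"
proof -
  have "(\<exists>\<gamma>'\<in>rootsM. \<exists>c>1. \<forall>x\<in>aM \<Theta>. res \<alpha> x = c * \<gamma>' x)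
      \<longleftrightarrow> (\<exists>\<gamma>\<in>R. \<gamma> \<notin> span \<Theta> \<and> (\<exists>c>1. \<alpha> - c *\<^sub>R \<gamma> \<in> span \<Theta>))"
    unfolding resM_multiple_iff[symmetric] by (metis rootsM_iff)
  moreover have "res \<alpha> \<in> rootsM" using assms rootsM_iff by blast
  ultimately show ?thesis unfolding reducedM_def reduced_AM_def by blast
qed

text \<open>
  To transport signs and the Weyl group action to rootsM we choose a representative root for
  each root of A_M; all choices are congruent modulo span \<Theta>.
\<close>
definition rep :: "('a \<Rightarrow> real) \<Rightarrow> 'a" where
  "rep \<beta> = (SOME \<alpha>. \<alpha> \<in> R \<and> \<alpha> \<notin> span \<Theta> \<and> res \<alpha> = \<beta>)"

definition posM :: "('a \<Rightarrow> real) \<Rightarrow> bool" where "posM \<beta> \<longleftrightarrow> pos (rep \<beta>)"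

definition actM :: "('a \<Rightarrow> 'a) \<Rightarrow> ('a \<Rightarrow> real) \<Rightarrow> ('a \<Rightarrow> real)" where "actM v \<beta> = res (v (rep \<beta>))"

definition negM :: "('a \<Rightarrow> real) \<Rightarrow> ('a \<Rightarrow> real)" where "negM \<beta> = res (- rep \<beta>)"

lemma rep_props:
  assumes "\<beta> \<in> rootsM" shows "rep \<beta> \<in> R" "rep \<beta> \<notin> span \<Theta>" "res (rep \<beta>) = \<beta>"
proof -
  have "\<exists>\<alpha>. \<alpha> \<in> R \<and> \<alpha> \<notin> span \<Theta> \<and> res \<alpha> = \<beta>" using assms rootsM_iff by metis
  then have "rep \<beta> \<in> R \<and> rep \<beta> \<notin> span \<Theta> \<and> res (rep \<beta>) = \<beta>" unfolding rep_def by (rule someI_ex)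
  then show "rep \<beta> \<in> R" "rep \<beta> \<notin> span \<Theta>" "res (rep \<beta>) = \<beta>" by auto
qed

lemma rep_res: assumes "\<alpha> \<in> R" "\<alpha> \<notin> span \<Theta>" shows "rep (res \<alpha>) - \<alpha> \<in> span \<Theta>"
  using rep_props(3)[of "res \<alpha>"] assms rootsM_iff resM_eq_iff by blast

lemma uminus_nonlevi: "\<alpha> \<in> R \<Longrightarrow> \<alpha> \<notin> span \<Theta> \<Longrightarrow> - \<alpha> \<in> R \<and> - \<alpha> \<notin> span \<Theta>"
  using uminus_in_R span_neg by fastforce

lemma posM_res: assumes "\<alpha> \<in> R" "\<alpha> \<notin> span \<Theta>" shows "posM (res \<alpha>) \<longleftrightarrow> pos \<alpha>"
proof -
  have "res \<alpha> \<in> rootsM" using assms rootsM_iff by blast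
  then have r: "rep (res \<alpha>) \<in> R" "rep (res \<alpha>) \<notin> span \<Theta>" using rep_props by auto
  have "rep (res \<alpha>) - 1 *\<^sub>R \<alpha> \<in> span \<Theta>" using rep_res[OF assms] by simp
  then show ?thesis unfolding posM_def using pos_congruent[OF r(1) assms(1) r(2) zero_less_one] by simp
qed

lemma actM_res:
  assumes "normalizes v" "\<alpha> \<in> R" "\<alpha> \<notin> span \<Theta>" shows "actM v (res \<alpha>) = res (v \<alpha>)"
  unfolding actM_def resM_eq_iff using normalizes_congruent[OF assms(1), of _ 1] rep_res[OF assms(2,3)] by simp

lemma negM_res: assumes "\<alpha> \<in> R" "\<alpha> \<notin> span \<Theta>" shows "negM (res \<alpha>) = res (- \<alpha>)"
  unfolding negM_def resM_eq_iff using span_neg[OF rep_res[OF assms]] by simp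

lemma rootsM_res_cases:
  assumes "\<beta> \<in> rootsM" "\<And>\<alpha>. \<alpha> \<in> R \<Longrightarrow> \<alpha> \<notin> span \<Theta> \<Longrightarrow> Q (res \<alpha>)"
  shows "Q \<beta>"
proof -
  obtain \<alpha> where "\<alpha> \<in> R" "\<alpha> \<notin> span \<Theta>" "\<beta> = res \<alpha>" using assms(1) rootsM_iff by blast
  then show ?thesis using assms(2) by simp
qed

lemma actM_comp:
  assumes w: "normalizes w" and w': "normalizes w'" and b: "\<beta> \<in> rootsM"
  shows "actM (w \<circ> w') \<beta> = actM w (actM w' \<beta>)"
proof -
  obtain \<alpha> where a: "\<alpha> \<in> R" "\<alpha> \<notin> span \<Theta>" "\<beta> = res \<alpha>" using b rootsM_iff by blast
  have "actM (w \<circ> w') \<beta> = res (w (w' \<alpha>))" using actM_res[OF normalizes_comp[OF w w'] a(1,2)] a(3) by simp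
  also have "\<dots> = actM w (actM w' \<beta>)"
    using actM_res[OF w' a(1,2)] actM_res[OF w normalizes_root[OF w' a(1)] normalizes_nonlevi[OF w' a(1,2)]] a(3)
    by simp
  finally show ?thesis .
qed

lemma actM_inverse:
  "normalizes v \<Longrightarrow> normalizes u \<Longrightarrow> \<forall>x. u (v x) = x \<Longrightarrow> \<beta> \<in> rootsM \<Longrightarrow> actM u (actM v \<beta>) = \<beta>"
  by (erule rootsM_res_cases) (simp add: actM_res normalizes_root normalizes_nonlevi)

lemma posM_actM: "normalizes v \<Longrightarrow> \<beta> \<in> rootsM \<Longrightarrow> posM (actM v \<beta>) \<longleftrightarrow> pos (v (rep \<beta>))"
  unfolding actM_def using posM_res normalizes_root normalizes_nonlevi rep_props by blast

lemma posM_negM: "\<beta> \<in> rootsM \<Longrightarrow> posM (negM \<beta>) \<longleftrightarrow> \<not> posM \<beta>"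
  by (erule rootsM_res_cases) (simp add: negM_res posM_res uminus_nonlevi pos_uminus_iff)

lemma negM_negM: "\<beta> \<in> rootsM \<Longrightarrow> negM (negM \<beta>) = \<beta>"
  by (erule rootsM_res_cases) (simp add: negM_res uminus_nonlevi)

lemma actM_negM: "normalizes v \<Longrightarrow> \<beta> \<in> rootsM \<Longrightarrow> actM v (negM \<beta>) = negM (actM v \<beta>)"
  by (erule rootsM_res_cases)
    (simp add: negM_res actM_res uminus_nonlevi normalizes_root normalizes_nonlevi weyl_uminus normalizes_weyl)

lemma actM_reducedM:
  assumes v: "normalizes v" and u: "normalizes u" and uv: "\<forall>x. u (v x) = x" and b: "\<beta> \<in> reducedM"
  shows "actM v \<beta> \<in> reducedM"
proof -
  obtain \<alpha> where a: "\<alpha> \<in> R" "\<alpha> \<notin> span \<Theta>" "\<beta> = res \<alpha>" using b reducedM_subset rootsM_iff by blast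
  have "v \<alpha> - c *\<^sub>R \<gamma> \<notin> span \<Theta>" if "\<gamma> \<in> R" "\<gamma> \<notin> span \<Theta>" "c > 1" for \<gamma> c
  proof
    assume "v \<alpha> - c *\<^sub>R \<gamma> \<in> span \<Theta>"
    then have "\<alpha> - c *\<^sub>R u \<gamma> \<in> span \<Theta>" using normalizes_congruent[OF u] uv by fastforce
    then show False
      using b a reduced_res_iff normalizes_root[OF u that(1)] normalizes_nonlevi[OF u that(1,2)] that(3) by blast
  qed
  then show ?thesis
    using a actM_res[OF v] reduced_res_iff normalizes_root[OF v a(1)] normalizes_nonlevi[OF v a(1,2)] by simp
qed

lemma negM_reducedM: assumes b: "\<beta> \<in> reducedM" shows "negM \<beta> \<in> reducedM"
proof -
  obtain \<alpha> where a: "\<alpha> \<in> R" "\<alpha> \<notin> span \<Theta>" "\<beta> = res \<alpha>" using b reducedM_subset rootsM_iff by blast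
  have "- \<alpha> - c *\<^sub>R \<gamma> \<notin> span \<Theta>" if "\<gamma> \<in> R" "\<gamma> \<notin> span \<Theta>" "c > 1" for \<gamma> c
  proof
    assume "- \<alpha> - c *\<^sub>R \<gamma> \<in> span \<Theta>"
    then have "- (- \<alpha> - c *\<^sub>R \<gamma>) \<in> span \<Theta>" by (rule span_neg)
    then have "\<alpha> - c *\<^sub>R (- \<gamma>) \<in> span \<Theta>" by (simp add: algebra_simps)
    then show False using b a reduced_res_iff uminus_nonlevi[OF that(1,2)] that(3) by blast
  qed
  then show ?thesis using a negM_res reduced_res_iff uminus_nonlevi by simp
qed

end

section \<open>l_M as a number of sign changes\<close>

context levi_setting
begin

definition inverse_pair :: "('a \<Rightarrow> 'a) \<Rightarrow> ('a \<Rightarrow> 'a) \<Rightarrow> bool" where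
  "inverse_pair u v \<longleftrightarrow> normalizes u \<and> normalizes v \<and> (\<forall>x. u (v x) = x) \<and> (\<forall>x. v (u x) = x)"

lemma inverse_pair_sym: "inverse_pair u v \<Longrightarrow> inverse_pair v u" unfolding inverse_pair_def by auto

lemma exists_inverse_pair: "normalizes v \<Longrightarrow> \<exists>u. inverse_pair u v"
  using normalizes_inverse unfolding inverse_pair_def by blast

lemma actM_bij: assumes "inverse_pair u v" shows "bij_betw (actM v) reducedM reducedM"
proof (rule bij_betw_byWitness[where f' = "actM u"])
  show "\<forall>\<beta>\<in>reducedM. actM u (actM v \<beta>) = \<beta>" "\<forall>\<beta>\<in>reducedM. actM v (actM u \<beta>) = \<beta>"
    using assms actM_inverse reducedM_subset unfolding inverse_pair_def by blast+
  show "actM v ` reducedM \<subseteq> reducedM" "actM u ` reducedM \<subseteq> reducedM"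
    using assms actM_reducedM unfolding inverse_pair_def by blast+
qed

lemma roots_P_iff: assumes "\<beta> \<in> rootsM" shows "\<beta> \<in> roots_P R \<Delta> \<Theta> \<longleftrightarrow> posM \<beta>"
proof
  assume "\<beta> \<in> roots_P R \<Delta> \<Theta>"
  then obtain \<alpha> where a: "pos \<alpha>" "\<beta> = res \<alpha>" "\<beta> \<noteq> res 0" unfolding roots_P_def by blast
  then have "\<alpha> \<notin> span \<Theta>" using resM_zero_iff by simp
  then show "posM \<beta>" using posM_res[OF pos_in_R[OF a(1)]] a by simp
next
  assume "posM \<beta>"
  moreover have "\<beta> \<noteq> res 0" using assms unfolding roots_AM_def by simp
  ultimately show "\<beta> \<in> roots_P R \<Delta> \<Theta>" unfolding roots_P_def posM_def using rep_props(3)[OF assms] by force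
qed

lemma roots_conj_opp_iff:
  assumes uv: "inverse_pair u v" and b: "\<beta> \<in> rootsM"
  shows "\<beta> \<in> roots_conj_opp R \<Delta> \<Theta> v \<longleftrightarrow> \<not> posM (actM u \<beta>)"
proof
  have u: "normalizes u" and v: "normalizes v" and uv1: "\<forall>x. u (v x) = x"
    using uv unfolding inverse_pair_def by auto
  assume "\<beta> \<in> roots_conj_opp R \<Delta> \<Theta> v"
  then obtain \<gamma> where g: "negative_root R \<Delta> \<gamma>" "\<beta> = res (v \<gamma>)" "\<beta> \<noteq> res 0"
    unfolding roots_conj_opp_def by blast
  have gR: "\<gamma> \<in> R" "\<not> pos \<gamma>" using g(1) negative_root_iff by auto
  have vg: "v \<gamma> \<notin> span \<Theta>" using g(2,3) resM_zero_iff by simp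
  then have "\<gamma> \<notin> span \<Theta>" using normalizes_span[OF v] by blast
  moreover have "actM u \<beta> = res \<gamma>" using actM_res[OF u normalizes_root[OF v gR(1)] vg] g(2) uv1 by simp
  ultimately show "\<not> posM (actM u \<beta>)" using posM_res[OF gR(1)] gR(2) by simp
next
  have u: "normalizes u" and uv2: "\<forall>x. v (u x) = x"
    using uv unfolding inverse_pair_def by auto
  assume "\<not> posM (actM u \<beta>)"
  then have "negative_root R \<Delta> (u (rep \<beta>))"
    using negative_root_iff posM_actM[OF u b] normalizes_root[OF u rep_props(1)[OF b]] by simp
  moreover have "res (v (u (rep \<beta>))) = \<beta>" using uv2 rep_props(3)[OF b] by simp
  moreover have "\<beta> \<noteq> res 0" using b unfolding roots_AM_def by simp
  ultimately show "\<beta> \<in> roots_conj_opp R \<Delta> \<Theta> v" unfolding roots_conj_opp_def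
    by (metis DiffI empty_iff image_eqI insert_iff mem_Collect_eq)
qed

lemma lM_eq_card:
  assumes "inverse_pair u v"
  shows "lM R \<Delta> \<Theta> v = card {\<beta> \<in> reducedM. posM \<beta> \<and> \<not> posM (actM u \<beta>)}"
proof -
  have "{\<beta>. reduced_AM R \<Theta> \<beta> \<and> \<beta> \<in> roots_P R \<Delta> \<Theta> \<and> \<beta> \<in> roots_conj_opp R \<Delta> \<Theta> v}
      = {\<beta> \<in> reducedM. posM \<beta> \<and> \<not> posM (actM u \<beta>)}"
    using roots_P_iff roots_conj_opp_iff[OF assms] reducedM_subset unfolding reducedM_def by blast
  then show ?thesis unfolding lM_def by simp
qed

lemma card_sign_changes_lM:
  assumes v: "normalizes v"
  shows "card {\<beta> \<in> reducedM. posM \<beta> \<noteq> posM (actM v \<beta>)} = 2 * lM R \<Delta> \<Theta> v"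
proof -
  obtain u where uv: "inverse_pair u v" using exists_inverse_pair[OF v] by blast
  then have u: "normalizes u" unfolding inverse_pair_def by simp
  have inv: "actM u (actM v \<beta>) = \<beta>" if "\<beta> \<in> reducedM" for \<beta>
    using that uv actM_inverse reducedM_subset unfolding inverse_pair_def by blast
  have "card {\<beta> \<in> reducedM. posM \<beta> \<noteq> posM (actM u \<beta>)} = 2 * lM R \<Delta> \<Theta> v"
    unfolding lM_eq_card[OF uv]
  proof (rule card_sign_changes_double[where neg = negM])
    fix \<beta> assume b: "\<beta> \<in> reducedM"
    then have "\<beta> \<in> rootsM" using reducedM_subset by blast
    then show "negM (negM \<beta>) = \<beta>" "posM (negM \<beta>) \<longleftrightarrow> \<not> posM \<beta>" "actM u (negM \<beta>) = negM (actM u \<beta>)"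
      using negM_negM posM_negM actM_negM[OF u] by blast+
    show "negM \<beta> \<in> reducedM" using negM_reducedM[OF b] .
    show "actM u \<beta> \<in> reducedM" using bij_betw_apply[OF actM_bij[OF inverse_pair_sym[OF uv]] b] .
  qed (rule finite_reducedM)
  moreover have "card {\<beta> \<in> reducedM. posM \<beta> \<noteq> posM (actM v \<beta>)}
      = card {\<beta> \<in> reducedM. posM \<beta> \<noteq> posM (actM u \<beta>)}"
    using card_sign_changes_inverse[OF actM_bij[OF uv]] inv by blast
  ultimately show ?thesis by simp
qed

end

context levi_setting
begin

lemma lM_additive_iff:
  assumes w: "normalizes w" and w': "normalizes w'"
  shows "lM R \<Delta> \<Theta> (w \<circ> w') = lM R \<Delta> \<Theta> w + lM R \<Delta> \<Theta> w'
    \<longleftrightarrow> \<not> (\<exists>\<beta>\<in>reducedM. posM \<beta> \<noteq> posM (actM w' \<beta>) \<and> posM (actM w' \<beta>) \<noteq> posM (actM w (actM w' \<beta>)))"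
proof -
  obtain u where "inverse_pair u w'" using exists_inverse_pair[OF w'] by blast
  then have bij: "bij_betw (actM w') reducedM reducedM" by (rule actM_bij)
  have "{\<beta> \<in> reducedM. posM \<beta> \<noteq> posM (actM (w \<circ> w') \<beta>)}
      = {\<beta> \<in> reducedM. posM \<beta> \<noteq> posM (actM w (actM w' \<beta>))}"
    using actM_comp[OF w w'] reducedM_subset by auto
  then have comp: "card {\<beta> \<in> reducedM. posM \<beta> \<noteq> posM (actM w (actM w' \<beta>))} = 2 * lM R \<Delta> \<Theta> (w \<circ> w')"
    using card_sign_changes_lM[OF normalizes_comp[OF w w']] by simp
  have defect: "lM R \<Delta> \<Theta> (w \<circ> w')
      + card {\<beta> \<in> reducedM. posM \<beta> \<noteq> posM (actM w' \<beta>) \<and> posM (actM w' \<beta>) \<noteq> posM (actM w (actM w' \<beta>))}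
      = lM R \<Delta> \<Theta> w + lM R \<Delta> \<Theta> w'"
    using card_sign_changes_comp[OF finite_reducedM bij, of posM "actM w"] comp
      card_sign_changes_lM[OF w] card_sign_changes_lM[OF w'] by linarith
  show ?thesis unfolding defect[symmetric] using finite_reducedM by auto
qed

lemma congruence_factor_unique:
  assumes "\<gamma> \<notin> span \<Theta>" "\<alpha> - k1 *\<^sub>R \<gamma> \<in> span \<Theta>" "\<alpha> - k2 *\<^sub>R \<gamma> \<in> span \<Theta>"
  shows "k1 = k2"
proof (rule ccontr)
  assume ne: "k1 \<noteq> k2"
  have "(\<alpha> - k1 *\<^sub>R \<gamma>) - (\<alpha> - k2 *\<^sub>R \<gamma>) \<in> span \<Theta>" using span_diff[OF assms(2,3)] .
  then have "(k2 - k1) *\<^sub>R \<gamma> \<in> span \<Theta>" by (simp add: algebra_simps)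
  then have "inverse (k2 - k1) *\<^sub>R ((k2 - k1) *\<^sub>R \<gamma>) \<in> span \<Theta>" by (rule span_scale)
  then show False using ne assms(1) by simp
qed

text \<open>
  Every root outside the Levi is congruent modulo span \<Theta> to a positive multiple of a root
  whose restriction is reduced: take the largest possible factor.
\<close>
lemma reduced_multiple:
  assumes a: "\<alpha> \<in> R" "\<alpha> \<notin> span \<Theta>"
  obtains \<gamma> k where "\<gamma> \<in> R" "\<gamma> \<notin> span \<Theta>" "res \<gamma> \<in> reducedM" "k > 0" "\<alpha> - k *\<^sub>R \<gamma> \<in> span \<Theta>"
proof -
  define K where "K = {k::real. k > 0 \<and> (\<exists>\<gamma>\<in>R. \<gamma> \<notin> span \<Theta> \<and> \<alpha> - k *\<^sub>R \<gamma> \<in> span \<Theta>)}"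
  define g where "g \<gamma> = (SOME k::real. k > 0 \<and> \<alpha> - k *\<^sub>R \<gamma> \<in> span \<Theta>)" for \<gamma>
  have "K \<subseteq> g ` R"
  proof
    fix k assume "k \<in> K"
    then obtain \<gamma> where gm: "\<gamma> \<in> R" "\<gamma> \<notin> span \<Theta>" "k > 0" "\<alpha> - k *\<^sub>R \<gamma> \<in> span \<Theta>" unfolding K_def by blast
    have "g \<gamma> > 0 \<and> \<alpha> - g \<gamma> *\<^sub>R \<gamma> \<in> span \<Theta>" unfolding g_def by (rule someI[of _ k]) (use gm in simp)
    then have "g \<gamma> = k" using congruence_factor_unique[OF gm(2)] gm(4) by blast
    then show "k \<in> g ` R" using gm(1) by blast
  qed
  then have fK: "finite K" using finite_R finite_surj by blast
  have "1 \<in> K" unfolding K_def using a span_zero by (intro CollectI conjI bexI[of _ \<alpha>]) auto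
  then have kmK: "Max K \<in> K" using Max_in[OF fK] by auto
  then obtain \<gamma> where gm: "\<gamma> \<in> R" "\<gamma> \<notin> span \<Theta>" "Max K > 0" "\<alpha> - Max K *\<^sub>R \<gamma> \<in> span \<Theta>"
    unfolding K_def by blast
  have "\<gamma> - c *\<^sub>R \<gamma>' \<notin> span \<Theta>" if "\<gamma>' \<in> R" "\<gamma>' \<notin> span \<Theta>" "c > 1" for \<gamma>' c
  proof
    assume "\<gamma> - c *\<^sub>R \<gamma>' \<in> span \<Theta>"
    then have "(\<alpha> - Max K *\<^sub>R \<gamma>) + Max K *\<^sub>R (\<gamma> - c *\<^sub>R \<gamma>') \<in> span \<Theta>"
      using span_add[OF gm(4) span_scale] by blast
    then have "\<alpha> - (Max K * c) *\<^sub>R \<gamma>' \<in> span \<Theta>" by (simp add: algebra_simps)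
    moreover have "Max K * c > 0" using gm(3) that(3) by simp
    ultimately have "Max K * c \<in> K" using that(1,2) unfolding K_def by blast
    then have "Max K * c \<le> Max K" using Max_ge[OF fK] by simp
    then show False using gm(3) that(3) by simp
  qed
  then have "res \<gamma> \<in> reducedM" using reduced_res_iff[OF gm(1,2)] by blast
  then show ?thesis using that gm by blast
qed

lemma changes_sign_twice_res:
  assumes w: "normalizes w" and w': "normalizes w'" and a: "\<alpha> \<in> R" "\<alpha> \<notin> span \<Theta>"
  shows "(posM (res \<alpha>) \<noteq> posM (actM w' (res \<alpha>)) \<and> posM (actM w' (res \<alpha>)) \<noteq> posM (actM w (actM w' (res \<alpha>))))
    \<longleftrightarrow> changes_sign_twice w w' \<alpha>"
proof -
  have a1: "w' \<alpha> \<in> R" "w' \<alpha> \<notin> span \<Theta>" using normalizes_root[OF w' a(1)] normalizes_nonlevi[OF w' a] by auto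
  have a2: "w (w' \<alpha>) \<in> R" "w (w' \<alpha>) \<notin> span \<Theta>" using normalizes_root[OF w a1(1)] normalizes_nonlevi[OF w a1] by auto
  show ?thesis unfolding changes_sign_twice_def
    using posM_res[OF a] posM_res[OF a1] posM_res[OF a2] actM_res[OF w' a] actM_res[OF w a1] by simp
qed

lemma changes_sign_twice_congruent:
  assumes w: "normalizes w" and w': "normalizes w'" and a: "\<alpha> \<in> R" "\<alpha> \<notin> span \<Theta>"
    and g: "\<gamma> \<in> R" and k: "k > 0" "\<alpha> - k *\<^sub>R \<gamma> \<in> span \<Theta>"
  shows "changes_sign_twice w w' \<alpha> \<longleftrightarrow> changes_sign_twice w w' \<gamma>"
proof -
  have a1: "w' \<alpha> \<in> R" "w' \<alpha> \<notin> span \<Theta>" using normalizes_root[OF w' a(1)] normalizes_nonlevi[OF w' a] by auto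
  have a2: "w (w' \<alpha>) \<in> R" "w (w' \<alpha>) \<notin> span \<Theta>" using normalizes_root[OF w a1(1)] normalizes_nonlevi[OF w a1] by auto
  have k1: "w' \<alpha> - k *\<^sub>R w' \<gamma> \<in> span \<Theta>" using normalizes_congruent[OF w' k(2)] .
  have k2: "w (w' \<alpha>) - k *\<^sub>R w (w' \<gamma>) \<in> span \<Theta>" using normalizes_congruent[OF w k1] .
  show ?thesis unfolding changes_sign_twice_def
    using pos_congruent[OF a(1) g a(2) k] pos_congruent[OF a1(1) normalizes_root[OF w' g] a1(2) k(1) k1]
      pos_congruent[OF a2(1) normalizes_root[OF w normalizes_root[OF w' g]] a2(2) k(1) k2] by simp
qed

text \<open>
  For w, w' in W(M) some root changes sign twice iff some reduced root of A_M does: Levi roots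
  never change sign, and every other root behaves like a reduced one.
\<close>
lemma changes_sign_twice_iff_reducedM:
  assumes w: "w \<in> WM" and w': "w' \<in> WM"
  shows "(\<exists>\<alpha>\<in>R. changes_sign_twice w w' \<alpha>)
    \<longleftrightarrow> (\<exists>\<beta>\<in>reducedM. posM \<beta> \<noteq> posM (actM w' \<beta>) \<and> posM (actM w' \<beta>) \<noteq> posM (actM w (actM w' \<beta>)))"
proof
  have nw: "normalizes w" and nw': "normalizes w'" using WM_normalizes w w' by auto
  assume "\<exists>\<alpha>\<in>R. changes_sign_twice w w' \<alpha>"
  then obtain \<alpha> where a: "\<alpha> \<in> R" "changes_sign_twice w w' \<alpha>" by blast
  have "\<alpha> \<notin> span \<Theta>"
  proof
    assume "\<alpha> \<in> span \<Theta>"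
    then have "pos (w' \<alpha>) \<longleftrightarrow> pos \<alpha>" using WM_levi_pos_iff[OF w'] a(1) levi_iff by simp
    then show False using a(2) unfolding changes_sign_twice_def by simp
  qed
  then obtain \<gamma> k where gk: "\<gamma> \<in> R" "\<gamma> \<notin> span \<Theta>" "res \<gamma> \<in> reducedM" "k > 0" "\<alpha> - k *\<^sub>R \<gamma> \<in> span \<Theta>"
    using reduced_multiple[OF a(1)] by blast
  have "changes_sign_twice w w' \<gamma>"
    using changes_sign_twice_congruent[OF nw nw' a(1) \<open>\<alpha> \<notin> span \<Theta>\<close> gk(1,4,5)] a(2) by simp
  then show "\<exists>\<beta>\<in>reducedM. posM \<beta> \<noteq> posM (actM w' \<beta>) \<and> posM (actM w' \<beta>) \<noteq> posM (actM w (actM w' \<beta>))"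
    using changes_sign_twice_res[OF nw nw' gk(1,2)] gk(3) by blast
next
  have nw: "normalizes w" and nw': "normalizes w'" using WM_normalizes w w' by auto
  assume "\<exists>\<beta>\<in>reducedM. posM \<beta> \<noteq> posM (actM w' \<beta>) \<and> posM (actM w' \<beta>) \<noteq> posM (actM w (actM w' \<beta>))"
  then obtain \<beta> where b: "\<beta> \<in> reducedM" "posM \<beta> \<noteq> posM (actM w' \<beta>)" "posM (actM w' \<beta>) \<noteq> posM (actM w (actM w' \<beta>))"
    by blast
  then obtain \<alpha> where "\<alpha> \<in> R" "\<alpha> \<notin> span \<Theta>" "\<beta> = res \<alpha>" using reducedM_subset rootsM_iff by blast
  then show "\<exists>\<alpha>\<in>R. changes_sign_twice w w' \<alpha>" using changes_sign_twice_res[OF nw nw'] b by blast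
qed

end

theorem proposition1p1:
  fixes R \<Delta> \<Theta> :: "'a::euclidean_space set" and w w' :: "'a \<Rightarrow> 'a"
  assumes "root_system R" and "is_base R \<Delta>" and "\<Theta> \<subseteq> \<Delta>"
    and "w \<in> W_M R \<Delta> \<Theta>" and "w' \<in> W_M R \<Delta> \<Theta>"
  shows "lM R \<Delta> \<Theta> (w \<circ> w') = lM R \<Delta> \<Theta> w + lM R \<Delta> \<Theta> w'
     \<longleftrightarrow> len \<Delta> (w \<circ> w') = len \<Delta> w + len \<Delta> w'"
proof -
  interpret levi_setting R \<Delta> \<Theta> using assms(1-3) by unfold_locales
  have w: "normalizes w" and w': "normalizes w'" using WM_normalizes assms(4,5) by auto
  have "lM R \<Delta> \<Theta> (w \<circ> w') = lM R \<Delta> \<Theta> w + lM R \<Delta> \<Theta> w'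
      \<longleftrightarrow> \<not> (\<exists>\<beta>\<in>reducedM. posM \<beta> \<noteq> posM (actM w' \<beta>) \<and> posM (actM w' \<beta>) \<noteq> posM (actM w (actM w' \<beta>)))"
    by (rule lM_additive_iff[OF w w'])
  also have "\<dots> \<longleftrightarrow> \<not> (\<exists>\<alpha>\<in>R. changes_sign_twice w w' \<alpha>)"
    using changes_sign_twice_iff_reducedM[OF assms(4,5)] by simp
  also have "\<dots> \<longleftrightarrow> len \<Delta> (w \<circ> w') = len \<Delta> w + len \<Delta> w'"
    using len_additive_iff[OF normalizes_weyl[OF w] normalizes_weyl[OF w']] by simp
  finally show ?thesis .
qed

end
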